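(* Let $1<p<\infty$. (i) For every $\varphi\in W^{1,p}(X,\nu)\cap L^\infty(X,\nu)$ and $\delta>0$ there is a sequence $(\varphi_n)\subset C^1_b(X)$ with $\|\varphi_n\|_\infty\le(1+\delta)\|\varphi\|_{L^\infty(X,\nu)}$ and $\varphi_n\to\varphi$ in $W^{1,p}(X,\nu)$. (ii) If $\varphi,\psi\in W^{1,p}(X,\nu)\cap L^\infty(X,\nu)$, then $\varphi\psi\in W^{1,p}(X,\nu)$ and $M_p(\varphi\psi)=\varphi M_p\psi+\psi M_p\varphi$.
   Context: $X$ separable real Hilbert space, $\nu$ Borel probability measure on $X$, $R\in\mathcal L(X)$. $C^1_b(X)$: bounded continuously Fréchet differentiable $\varphi:X\to\mathbb R$ with bounded gradient. Standing assumption: for every $z\in X$ there is $v_z\in\bigcap_{r>1}L^r(X,\nu)$ with $\int_X\langle R\nabla\varphi,z\rangle d\nu=\int_Xv_z\varphi\,d\nu$ for $\varphi\in C^1_b(X)$. $M_p$ is the closure in $L^p(X,\nu)$ of $R\nabla:C^1_b(X)\to L^p(X,\nu;X)$ and $W^{1,p}(X,\nu)$ is its domain with the graph norm $\|f\|_{L^p(X,\nu)}+\|M_pf\|_{L^p(X,\nu;X)}$. *)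

theory Defs
  imports "HOL-Analysis.Analysis" "HOL-Probability.Probability"
begin

definition grad :: "('a::real_inner \<Rightarrow> real) \<Rightarrow> 'a \<Rightarrow> 'a" where
  "grad f x = (SOME g. (f has_derivative (\<lambda>h. g \<bullet> h)) (at x))"

definition C1b :: "('a::real_inner \<Rightarrow> real) set" where
  "C1b = {f. bounded (range f)
            \<and> (\<forall>x. \<exists>g. (f has_derivative (\<lambda>h. g \<bullet> h)) (at x))
            \<and> continuous_on UNIV (grad f)
            \<and> bounded (range (grad f))}"

definition in_Lp :: "'a measure \<Rightarrow> real \<Rightarrow> ('a \<Rightarrow> 'b::{real_normed_vector,second_countable_topology}) \<Rightarrow> bool" where
  "in_Lp M p f \<longleftrightarrow> f \<in> borel_measurable M \<and> integrable M (\<lambda>x. norm (f x) powr p)"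

definition Lp_conv :: "'a measure \<Rightarrow> real \<Rightarrow> (nat \<Rightarrow> 'a \<Rightarrow> 'b::real_normed_vector) \<Rightarrow> ('a \<Rightarrow> 'b) \<Rightarrow> bool" where
  "Lp_conv M p F f \<longleftrightarrow>
     ((\<lambda>n. \<integral>\<^sup>+ x. ennreal (norm (F n x - f x) powr p) \<partial>M) \<longlongrightarrow> 0) sequentially"

text \<open>Graph of the closure M_p of R\<nabla> : C^1_b \<rightarrow> L^p(X;X): (f,g) in the graph iff
  f = L^p-lim \<phi>_n and g = L^p-lim R\<nabla>\<phi>_n for some \<phi>_n in C^1_b.\<close>
definition Mp_graph :: "'a::{real_inner,polish_space} measure \<Rightarrow> ('a \<Rightarrow>\<^sub>L 'a) \<Rightarrow> real
    \<Rightarrow> ('a \<Rightarrow> real) \<Rightarrow> ('a \<Rightarrow> 'a) \<Rightarrow> bool" where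
  "Mp_graph M R p f g \<longleftrightarrow> in_Lp M p f \<and> in_Lp M p g \<and>
     (\<exists>F. (\<forall>n. F n \<in> C1b) \<and> Lp_conv M p F f
          \<and> Lp_conv M p (\<lambda>n x. blinfun_apply R (grad (F n) x)) g)"

definition W1p :: "'a::{real_inner,polish_space} measure \<Rightarrow> ('a \<Rightarrow>\<^sub>L 'a) \<Rightarrow> real \<Rightarrow> ('a \<Rightarrow> real) set" where
  "W1p M R p = {f. \<exists>g. Mp_graph M R p f g}"

definition in_Linf :: "'a measure \<Rightarrow> ('a \<Rightarrow> real) \<Rightarrow> bool" where
  "in_Linf M f \<longleftrightarrow> f \<in> borel_measurable M \<and> (\<exists>C. AE x in M. \<bar>f x\<bar> \<le> C)"

definition Linf_norm :: "'a measure \<Rightarrow> ('a \<Rightarrow> real) \<Rightarrow> real" where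
  "Linf_norm M f = real_of_ereal (esssup M (\<lambda>x. ereal \<bar>f x\<bar>))"

end

(* The approximants in (i) come from a C^1_b sequence approximating (\<phi>, g), composed with a
   smooth clamp that is the identity on [-a, a] and takes values in [-(a + b), a + b], where
   a = \<parallel>\<phi>\<parallel>_\<infinity> and b = \<delta> a; along an a.e. convergent subsequence, the chain rule and dominated
   convergence show that both limits survive the clamping.  That the gradients then converge to
   every g with (\<phi>, g) in the graph of M_p is the closability of R\<nabla>: if bounded \<Phi>_n \<in> C^1_b tend
   to 0 a.e. and R\<nabla>\<Phi>_n \<rightarrow> g in L^p, integration by parts against the standing assumption gives
   \<integral> \<psi> <g, z> d\<nu> = 0 for all \<psi> \<in> C^1_b and z \<in> X, and smoothed indicators of balls show that
   C^1_b is rich enough to force g = 0.  With uniformly bounded approximants at hand, the product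
   rule (ii) passes from C^1_b to the closure. *)

theory Submission
  imports Defs
begin

section \<open>The class C^1_b\<close>

lemma grad_eqI:
  fixes f :: "'a::real_inner \<Rightarrow> real"
  assumes "(f has_derivative (\<lambda>h. g \<bullet> h)) (at x)"
  shows "grad f x = g"
proof -
  have "(f has_derivative (\<lambda>h. grad f x \<bullet> h)) (at x)"
    unfolding grad_def by (rule someI[of _ g]) (rule assms)
  then have "(\<lambda>h. grad f x \<bullet> h) = (\<lambda>h. g \<bullet> h)"
    using assms by (rule has_derivative_unique)
  then have "(grad f x - g) \<bullet> (grad f x - g) = 0"
    by (metis inner_diff_left right_minus_eq)
  then show ?thesis by simp
qed

lemma C1bI:
  fixes f :: "'a::real_inner \<Rightarrow> real"
  assumes d: "\<And>x. (f has_derivative (\<lambda>h. G x \<bullet> h)) (at x)"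
    and "continuous_on UNIV G"
    and "\<And>x. \<bar>f x\<bar> \<le> B1" and "\<And>x. norm (G x) \<le> B2"
  shows "f \<in> C1b" "grad f = G"
proof -
  show g: "grad f = G" using grad_eqI[OF d] by auto
  show "f \<in> C1b" unfolding C1b_def
    using assms by (auto simp: g bounded_iff intro!: exI)
qed

lemma C1bD:
  fixes f :: "'a::real_inner \<Rightarrow> real"
  assumes "f \<in> C1b"
  shows "(f has_derivative (\<lambda>h. grad f x \<bullet> h)) (at x)"
    "continuous_on UNIV (grad f)"
    "\<exists>B. \<forall>x. \<bar>f x\<bar> \<le> B" "\<exists>B. \<forall>x. norm (grad f x) \<le> B"
proof -
  from assms obtain g where "(f has_derivative (\<lambda>h. g \<bullet> h)) (at x)"
    unfolding C1b_def by auto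
  then show "(f has_derivative (\<lambda>h. grad f x \<bullet> h)) (at x)"
    using grad_eqI by metis
  show "continuous_on UNIV (grad f)" "\<exists>B. \<forall>x. \<bar>f x\<bar> \<le> B" "\<exists>B. \<forall>x. norm (grad f x) \<le> B"
    using assms unfolding C1b_def bounded_iff by auto
qed

lemma C1b_continuous: "f \<in> C1b \<Longrightarrow> continuous_on UNIV f"
  by (meson C1bD(1) continuous_at_imp_continuous_on has_derivative_continuous)

lemma C1b_borel_measurable:
  assumes "sets M = sets borel" "f \<in> C1b"
  shows "f \<in> borel_measurable M"
  by (subst measurable_cong_sets[OF assms(1) refl])
    (rule borel_measurable_continuous_onI[OF C1b_continuous[OF assms(2)]])

lemma C1b_R_grad_borel_measurable:
  fixes M :: "'a::{real_inner, polish_space} measure"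
  assumes "sets M = sets borel" "f \<in> C1b"
  shows "(\<lambda>x. blinfun_apply R (grad f x)) \<in> borel_measurable M"
proof -
  have "continuous_on UNIV (\<lambda>x. blinfun_apply R (grad f x))"
    using C1bD(2)[OF assms(2)] by (intro continuous_intros)
  then show ?thesis
    by (subst measurable_cong_sets[OF assms(1) refl]) (rule borel_measurable_continuous_onI)
qed

lemma C1b_R_grad_bounded:
  assumes "f \<in> C1b"
  obtains B where "\<And>x. norm (blinfun_apply R (grad f x)) \<le> B"
proof -
  obtain B where B: "\<And>x. norm (grad f x) \<le> B" using C1bD(4)[OF assms] by metis
  have "norm (blinfun_apply R (grad f x)) \<le> norm R * B" for x
    using norm_blinfun[of R "grad f x"] B[of x] by (meson mult_left_mono norm_ge_zero order_trans)
  then show thesis by (rule that)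
qed

lemma C1b_const: "(\<lambda>x. c) \<in> C1b" "grad (\<lambda>x. c) = (\<lambda>x. 0)"
  by (rule C1bI[of _ "\<lambda>x. 0" "\<bar>c\<bar>" 0]; auto intro!: derivative_eq_intros)+

lemma C1b_add:
  assumes "f \<in> C1b" "g \<in> C1b"
  shows "(\<lambda>x. f x + g x) \<in> C1b" "grad (\<lambda>x. f x + g x) = (\<lambda>x. grad f x + grad g x)"
proof -
  obtain B1 B2 C1 C2 where b: "\<And>x. \<bar>f x\<bar> \<le> B1" "\<And>x. \<bar>g x\<bar> \<le> B2"
    "\<And>x. norm (grad f x) \<le> C1" "\<And>x. norm (grad g x) \<le> C2"
    using C1bD(3,4)[OF assms(1)] C1bD(3,4)[OF assms(2)] by metis
  have d: "((\<lambda>x. f x + g x) has_derivative (\<lambda>h. (grad f x + grad g x) \<bullet> h)) (at x)" for x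
    by (rule has_derivative_eq_rhs, rule has_derivative_add[OF C1bD(1)[OF assms(1)] C1bD(1)[OF assms(2)]])
      (simp add: inner_add_left)
  have c: "continuous_on UNIV (\<lambda>x. grad f x + grad g x)"
    using C1bD(2)[OF assms(1)] C1bD(2)[OF assms(2)] by (intro continuous_intros)
  have b1: "\<bar>f x + g x\<bar> \<le> B1 + B2" for x using b(1,2)[of x] by linarith
  have b2: "norm (grad f x + grad g x) \<le> C1 + C2" for x
    using b(3,4)[of x] norm_triangle_ineq[of "grad f x" "grad g x"] by linarith
  show "(\<lambda>x. f x + g x) \<in> C1b" "grad (\<lambda>x. f x + g x) = (\<lambda>x. grad f x + grad g x)"
    using C1bI[OF d c b1 b2] by auto
qed

lemma C1b_mult:
  assumes "f \<in> C1b" "g \<in> C1b"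
  shows "(\<lambda>x. f x * g x) \<in> C1b"
    "grad (\<lambda>x. f x * g x) = (\<lambda>x. f x *\<^sub>R grad g x + g x *\<^sub>R grad f x)"
proof -
  obtain B1 B2 C1 C2 where b: "\<And>x. \<bar>f x\<bar> \<le> B1" "\<And>x. \<bar>g x\<bar> \<le> B2"
    "\<And>x. norm (grad f x) \<le> C1" "\<And>x. norm (grad g x) \<le> C2"
    using C1bD(3,4)[OF assms(1)] C1bD(3,4)[OF assms(2)] by metis
  have d: "((\<lambda>x. f x * g x) has_derivative (\<lambda>h. (f x *\<^sub>R grad g x + g x *\<^sub>R grad f x) \<bullet> h)) (at x)" for x
    by (rule has_derivative_eq_rhs, rule has_derivative_mult[OF C1bD(1)[OF assms(1)] C1bD(1)[OF assms(2)]])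
      (auto simp add: inner_add_left algebra_simps)
  have c: "continuous_on UNIV (\<lambda>x. f x *\<^sub>R grad g x + g x *\<^sub>R grad f x)"
    using C1bD(2)[OF assms(1)] C1bD(2)[OF assms(2)] C1b_continuous[OF assms(1)] C1b_continuous[OF assms(2)]
    by (intro continuous_intros)
  have b1: "\<bar>f x * g x\<bar> \<le> B1 * B2" for x
    using b(1,2)[of x] by (simp add: abs_mult mult_mono')
  have b2: "norm (f x *\<^sub>R grad g x + g x *\<^sub>R grad f x) \<le> B1 * C2 + B2 * C1" for x
  proof -
    have "norm (f x *\<^sub>R grad g x) \<le> B1 * C2" using b(1,4)[of x] by (simp add: mult_mono')
    moreover have "norm (g x *\<^sub>R grad f x) \<le> B2 * C1" using b(2,3)[of x] by (simp add: mult_mono')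
    ultimately show ?thesis
      using norm_triangle_ineq[of "f x *\<^sub>R grad g x" "g x *\<^sub>R grad f x"] by linarith
  qed
  show "(\<lambda>x. f x * g x) \<in> C1b"
      "grad (\<lambda>x. f x * g x) = (\<lambda>x. f x *\<^sub>R grad g x + g x *\<^sub>R grad f x)"
    using C1bI[OF d c b1 b2] by auto
qed

lemma C1b_diff:
  assumes "f \<in> C1b" "g \<in> C1b"
  shows "(\<lambda>x. f x - g x) \<in> C1b" "grad (\<lambda>x. f x - g x) = (\<lambda>x. grad f x - grad g x)"
proof -
  have "(\<lambda>x. - g x) \<in> C1b" "grad (\<lambda>x. - g x) = (\<lambda>x. - grad g x)"
    using C1b_mult[OF C1b_const(1) assms(2), of "-1"] by (auto simp: C1b_const(2))
  from C1b_add[OF assms(1) this(1)] this(2) show "(\<lambda>x. f x - g x) \<in> C1b"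
      "grad (\<lambda>x. f x - g x) = (\<lambda>x. grad f x - grad g x)"
    by auto
qed

lemma C1b_prod:
  fixes n :: nat
  assumes "\<And>j. j < n \<Longrightarrow> f j \<in> C1b"
  shows "(\<lambda>x. \<Prod>j<n. f j x) \<in> C1b"
  using assms
proof (induction n)
  case 0
  then show ?case using C1b_const(1)[of 1] by simp
next
  case (Suc n)
  then show ?case using C1b_mult(1)[OF Suc.IH Suc.prems[of n]] by (simp add: prod.lessThan_Suc)
qed

lemma C1b_compose:
  fixes \<theta> \<theta>' :: "real \<Rightarrow> real"
  assumes f: "f \<in> C1b"
    and d: "\<And>t. (\<theta> has_real_derivative \<theta>' t) (at t)"
    and c: "continuous_on UNIV \<theta>'"
    and b: "\<And>t. \<bar>\<theta> t\<bar> \<le> B" "\<And>t. \<bar>\<theta>' t\<bar> \<le> L"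
  shows "(\<lambda>x. \<theta> (f x)) \<in> C1b" "grad (\<lambda>x. \<theta> (f x)) = (\<lambda>x. \<theta>' (f x) *\<^sub>R grad f x)"
proof -
  obtain C where bc: "\<And>x. norm (grad f x) \<le> C" using C1bD(4)[OF f] by metis
  have dd: "((\<lambda>x. \<theta> (f x)) has_derivative (\<lambda>h. (\<theta>' (f x) *\<^sub>R grad f x) \<bullet> h)) (at x)" for x
    by (rule has_derivative_eq_rhs, rule DERIV_compose_FDERIV[OF d C1bD(1)[OF f]])
      (auto simp: algebra_simps)
  have cc: "continuous_on UNIV (\<lambda>x. \<theta>' (f x) *\<^sub>R grad f x)"
    by (intro continuous_intros C1bD(2)[OF f] continuous_on_compose2[OF c C1b_continuous[OF f]]) auto
  have b2: "norm (\<theta>' (f x) *\<^sub>R grad f x) \<le> L * C" for x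
    using b(2)[of "f x"] bc[of x] by (simp add: mult_mono')
  show "(\<lambda>x. \<theta> (f x)) \<in> C1b" "grad (\<lambda>x. \<theta> (f x)) = (\<lambda>x. \<theta>' (f x) *\<^sub>R grad f x)"
    using C1bI[OF dd cc b(1) b2] by auto
qed

section \<open>A smooth clamp\<close>

lemma has_real_derivative_glue:
  fixes g h g' h' :: "real \<Rightarrow> real"
  assumes g: "\<And>t. t \<le> c \<Longrightarrow> (g has_real_derivative g' t) (at t)"
    and h: "\<And>t. t \<ge> c \<Longrightarrow> (h has_real_derivative h' t) (at t)"
    and e1: "g c = h c" and e2: "g' c = h' c"
  shows "((\<lambda>t. if t \<le> c then g t else h t) has_real_derivative (if t \<le> c then g' t else h' t)) (at t)"
proof -
  have cS: "closure {..c} = {..c}" and cT: "closure {c<..} = {c..}" by auto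
  have *: "((\<lambda>x. if x \<in> {..c} then g x else h x) has_derivative
      (if t \<in> {..c} then (\<lambda>y. g' t * y) else (\<lambda>y. h' t * y))) (at t within ({..c} \<union> {c<..}))"
  proof (rule has_derivative_If_within_closures)
    show "(g has_derivative (\<lambda>y. g' x * y)) (at x within {..c} \<union> (closure {..c} \<inter> closure {c<..}))"
      if "x \<in> {..c} \<union> (closure {..c} \<inter> closure {c<..})" for x
      using that g[of x] by (auto simp: cS cT has_field_derivative_def intro: has_derivative_at_withinI)
    show "(h has_derivative (\<lambda>y. h' x * y)) (at x within {c<..} \<union> (closure {..c} \<inter> closure {c<..}))"
      if "x \<in> {c<..} \<union> (closure {..c} \<inter> closure {c<..})" for x
      using that h[of x] by (auto simp: cS cT has_field_derivative_def intro: has_derivative_at_withinI)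
    show "g x = h x" "(\<lambda>y. g' x * y) = (\<lambda>y. h' x * y)"
      if "x \<in> closure {..c}" "x \<in> closure {c<..}" for x
      using that e1 e2 by (auto simp: cS cT)
  qed auto
  have U: "{..c} \<union> {c<..} = (UNIV::real set)" by auto
  show ?thesis
    using * unfolding U has_field_derivative_def
    by (auto simp: mult.commute split: if_splits elim!: has_derivative_eq_rhs)
qed

text \<open>For \<open>t \<ge> a\<close>, \<open>t - clamp_excess a b t = a + b - b\<^sup>2 / (t - a + b)\<close> rises from \<open>a\<close>
  towards \<open>a + b\<close>, with slope 1 at \<open>t = a\<close>.\<close>

definition clamp_excess :: "real \<Rightarrow> real \<Rightarrow> real \<Rightarrow> real" where
  "clamp_excess a b t = max t a - a - b + b\<^sup>2 / (max t a - a + b)"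

definition clamp_excess' :: "real \<Rightarrow> real \<Rightarrow> real \<Rightarrow> real" where
  "clamp_excess' a b t = 1 - b\<^sup>2 / (max t a - a + b)\<^sup>2"

definition soft_clamp :: "real \<Rightarrow> real \<Rightarrow> real \<Rightarrow> real" where
  "soft_clamp a b t = t - clamp_excess a b t + clamp_excess a b (- t)"

definition soft_clamp' :: "real \<Rightarrow> real \<Rightarrow> real \<Rightarrow> real" where
  "soft_clamp' a b t = 1 - clamp_excess' a b t - clamp_excess' a b (- t)"

lemma clamp_excess_below: "b > 0 \<Longrightarrow> t \<le> a \<Longrightarrow> clamp_excess a b t = 0"
  by (simp add: clamp_excess_def max_def power2_eq_square)

lemma clamp_excess'_below: "b > 0 \<Longrightarrow> t \<le> a \<Longrightarrow> clamp_excess' a b t = 0"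
  by (simp add: clamp_excess'_def max_def power2_eq_square)

lemma clamp_excess_above:
  assumes b: "b > 0" and t: "t \<ge> a"
  shows "a \<le> t - clamp_excess a b t" "t - clamp_excess a b t \<le> a + b"
proof -
  let ?m = "t - a + b"
  have m: "?m \<ge> b" using t by simp
  have e: "t - clamp_excess a b t = a + b - b\<^sup>2 / ?m" using t by (simp add: clamp_excess_def max_def)
  have "b\<^sup>2 / ?m \<le> b" using m b by (simp add: power2_eq_square divide_le_eq)
  moreover have "b\<^sup>2 / ?m \<ge> 0" using m b by simp
  ultimately show "a \<le> t - clamp_excess a b t" "t - clamp_excess a b t \<le> a + b"
    using e by linarith+
qed

lemma clamp_excess'_bounds:
  assumes b: "b > 0"
  shows "0 \<le> clamp_excess' a b t" "clamp_excess' a b t \<le> 1"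
proof -
  let ?m = "max t a - a + b"
  have m: "?m \<ge> b" by simp
  have "b\<^sup>2 \<le> ?m\<^sup>2" by (rule power_mono) (use m b in auto)
  then have "b\<^sup>2 / ?m\<^sup>2 \<le> 1" using m b by (simp add: divide_le_eq_1)
  then show "0 \<le> clamp_excess' a b t" "clamp_excess' a b t \<le> 1"
    by (simp_all add: clamp_excess'_def)
qed

lemma clamp_excess_has_derivative:
  assumes b: "b > 0"
  shows "(clamp_excess a b has_real_derivative clamp_excess' a b t) (at t)"
proof -
  have eq1: "clamp_excess a b = (\<lambda>t. if t \<le> a then 0 else t - a - b + b\<^sup>2 / (t - a + b))"
    using b by (auto simp: clamp_excess_def max_def power2_eq_square fun_eq_iff)
  have eq2: "clamp_excess' a b t = (if t \<le> a then 0 else 1 - b\<^sup>2 / (t - a + b)\<^sup>2)"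
    using b by (auto simp: clamp_excess'_def max_def power2_eq_square)
  have "((\<lambda>t. t - a - b + b\<^sup>2 / (t - a + b)) has_real_derivative 1 - b\<^sup>2 / (t - a + b)\<^sup>2) (at t)"
    if "t \<ge> a" for t
    using that b by (auto intro!: derivative_eq_intros simp: power2_eq_square)
  then show ?thesis unfolding eq1 eq2
    by (intro has_real_derivative_glue[where g="\<lambda>t. 0" and g'="\<lambda>t. 0"]) (use b in \<open>auto simp: power2_eq_square\<close>)
qed

lemma soft_clamp_has_derivative:
  assumes b: "b > 0"
  shows "(soft_clamp a b has_real_derivative soft_clamp' a b t) (at t)"
proof -
  have "((\<lambda>t. clamp_excess a b (- t)) has_real_derivative clamp_excess' a b (- t) * (- 1)) (at t)"
    by (rule DERIV_chain2[OF clamp_excess_has_derivative[OF b]]) (auto intro!: derivative_eq_intros)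
  from DERIV_add[OF DERIV_diff[OF DERIV_ident clamp_excess_has_derivative[OF b]] this]
  show ?thesis unfolding soft_clamp_def[abs_def] soft_clamp'_def by simp
qed

lemma soft_clamp_continuous: "b > 0 \<Longrightarrow> continuous_on UNIV (soft_clamp a b)"
  by (meson DERIV_isCont continuous_at_imp_continuous_on soft_clamp_has_derivative)

lemma soft_clamp'_continuous: "b > 0 \<Longrightarrow> continuous_on UNIV (soft_clamp' a b)"
  unfolding soft_clamp'_def[abs_def] clamp_excess'_def
  by (intro continuous_intros) (auto simp: max_def)

lemma soft_clamp_inside:
  assumes "b > 0" "\<bar>t\<bar> \<le> a"
  shows "soft_clamp a b t = t" "soft_clamp' a b t = 1"
  using assms by (simp_all add: soft_clamp_def soft_clamp'_def clamp_excess_below clamp_excess'_below)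

lemma soft_clamp_bound:
  assumes a: "a \<ge> 0" and b: "b > 0"
  shows "\<bar>soft_clamp a b t\<bar> \<le> a + b"
proof -
  consider "t \<ge> a" | "t \<le> - a" | "\<bar>t\<bar> \<le> a" by linarith
  then show ?thesis
  proof cases
    case 1
    then have "clamp_excess a b (- t) = 0" using a b by (intro clamp_excess_below) auto
    then show ?thesis using clamp_excess_above[OF b 1] a unfolding soft_clamp_def by auto
  next
    case 2
    then have "clamp_excess a b t = 0" using a b by (intro clamp_excess_below) auto
    then show ?thesis using clamp_excess_above[OF b, of a "- t"] 2 a unfolding soft_clamp_def by auto
  next
    case 3
    then show ?thesis using soft_clamp_inside[OF b 3] b by auto
  qed
qed

lemma soft_clamp'_bounds:
  assumes a: "a \<ge> 0" and b: "b > 0"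
  shows "0 \<le> soft_clamp' a b t" "soft_clamp' a b t \<le> 1"
proof -
  have "clamp_excess' a b t = 0 \<or> clamp_excess' a b (- t) = 0"
    using a b by (cases "t \<le> a") (auto intro: clamp_excess'_below)
  then show "0 \<le> soft_clamp' a b t" "soft_clamp' a b t \<le> 1"
    using clamp_excess'_bounds[OF b, of a t] clamp_excess'_bounds[OF b, of a "- t"]
    unfolding soft_clamp'_def by auto
qed

lemma soft_clamp_lipschitz:
  assumes a: "a \<ge> 0" and b: "b > 0"
  shows "\<bar>soft_clamp a b x - soft_clamp a b y\<bar> \<le> \<bar>x - y\<bar>"
proof -
  have *: "\<bar>soft_clamp a b v - soft_clamp a b u\<bar> \<le> \<bar>v - u\<bar>" if uv: "u < v" for u v
  proof -
    obtain z where "soft_clamp a b v - soft_clamp a b u = (v - u) * soft_clamp' a b z"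
      using MVT2[OF uv, of "soft_clamp a b" "soft_clamp' a b"] soft_clamp_has_derivative[OF b] by blast
    then show ?thesis using soft_clamp'_bounds[OF a b, of z] uv
      by (simp add: abs_mult mult_le_cancel_left1)
  qed
  show ?thesis
    using *[of x y] *[of y x] by (cases x y rule: linorder_cases) (auto simp: abs_minus_commute)
qed

section \<open>C^1_b separates finite signed measures\<close>

definition pos_square :: "real \<Rightarrow> real" where
  "pos_square s = (max s 0)\<^sup>2"

lemma pos_square_nonneg: "pos_square s \<ge> 0"
  by (simp add: pos_square_def)

lemma pos_square_has_derivative: "(pos_square has_real_derivative 2 * max s 0) (at s)"
proof -
  have eq1: "pos_square = (\<lambda>t. if t \<le> 0 then 0 else t\<^sup>2)"
    by (auto simp: pos_square_def max_def fun_eq_iff)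
  have eq2: "2 * max s 0 = (if s \<le> 0 then 0 else 2 * s)" by auto
  show ?thesis unfolding eq1 eq2
    by (rule has_real_derivative_glue[where g="\<lambda>t. 0" and g'="\<lambda>t. 0"]) (auto intro!: derivative_eq_intros)
qed

text \<open>Squaring the positive part makes the bump \<open>C\<^sup>1\<close> across the sphere.\<close>

definition ball_bump :: "'a::real_inner \<Rightarrow> real \<Rightarrow> real \<Rightarrow> 'a \<Rightarrow> real" where
  "ball_bump c r k x = 1 - exp (- k * pos_square (r\<^sup>2 - (x - c) \<bullet> (x - c)))"

definition ball_bump_grad :: "'a::real_inner \<Rightarrow> real \<Rightarrow> real \<Rightarrow> 'a \<Rightarrow> 'a" where
  "ball_bump_grad c r k x = (4 * k * exp (- k * pos_square (r\<^sup>2 - (x - c) \<bullet> (x - c)))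
     * max (r\<^sup>2 - (x - c) \<bullet> (x - c)) 0) *\<^sub>R (c - x)"

lemma ball_bump_has_derivative:
  fixes c :: "'a::real_inner"
  shows "(ball_bump c r k has_derivative (\<lambda>h. ball_bump_grad c r k x \<bullet> h)) (at x)"
proof -
  define q where "q x = r\<^sup>2 - (x - c) \<bullet> (x - c)" for x
  have dq: "(q has_derivative (\<lambda>h. ((- 2) *\<^sub>R (x - c)) \<bullet> h)) (at x)"
    unfolding q_def[abs_def]
    by (rule has_derivative_eq_rhs, rule has_derivative_diff[OF has_derivative_const],
        rule has_derivative_inner[OF has_derivative_diff[OF has_derivative_ident has_derivative_const]
          has_derivative_diff[OF has_derivative_ident has_derivative_const]])
      (auto simp: inner_commute algebra_simps fun_eq_iff)
  have dm: "((\<lambda>x. pos_square (q x)) has_derivative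
      (\<lambda>h. (((- 2) * (2 * max (q x) 0)) *\<^sub>R (x - c)) \<bullet> h)) (at x)"
    by (rule has_derivative_eq_rhs, rule DERIV_compose_FDERIV[OF pos_square_has_derivative dq])
      (auto simp: algebra_simps)
  have de: "((\<lambda>x. exp (- k * pos_square (q x))) has_derivative
      (\<lambda>h. (exp (- k * pos_square (q x)) * (- k) * ((- 2) * (2 * max (q x) 0))) *\<^sub>R (x - c) \<bullet> h)) (at x)"
    by (rule has_derivative_eq_rhs,
        rule DERIV_compose_FDERIV[OF DERIV_exp has_derivative_mult_right[OF dm]])
      (auto simp: algebra_simps)
  show ?thesis
    unfolding ball_bump_def[abs_def] ball_bump_grad_def q_def[symmetric]
    by (rule has_derivative_eq_rhs, rule has_derivative_diff[OF has_derivative_const de])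
      (auto simp: algebra_simps fun_eq_iff)
qed

lemma ball_bump_bounds:
  assumes "k \<ge> 0"
  shows "0 \<le> ball_bump c r k x" "ball_bump c r k x \<le> 1"
  using assms pos_square_nonneg[of "r\<^sup>2 - (x - c) \<bullet> (x - c)"]
  by (auto simp: ball_bump_def mult_nonneg_nonneg)

lemma ball_bump_grad_bound:
  fixes c :: "'a::real_inner"
  assumes r: "r > 0" and k: "k \<ge> 0"
  shows "norm (ball_bump_grad c r k x) \<le> 4 * k * r\<^sup>2 * r"
proof (cases "(x - c) \<bullet> (x - c) < r\<^sup>2")
  case True
  then have "norm (x - c) < r" using r by (simp add: norm_lt_square)
  then have "norm (c - x) \<le> r" by (simp add: norm_minus_commute)
  moreover have "max (r\<^sup>2 - (x - c) \<bullet> (x - c)) 0 \<le> r\<^sup>2" by auto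
  moreover have "exp (- k * pos_square (r\<^sup>2 - (x - c) \<bullet> (x - c))) \<le> 1"
    using k pos_square_nonneg by (simp add: mult_nonneg_nonneg)
  ultimately have "4 * k * exp (- k * pos_square (r\<^sup>2 - (x - c) \<bullet> (x - c)))
      * max (r\<^sup>2 - (x - c) \<bullet> (x - c)) 0 * norm (c - x) \<le> 4 * k * 1 * r\<^sup>2 * r"
    using k by (intro mult_mono) (auto simp: mult_nonneg_nonneg)
  then show ?thesis using k unfolding ball_bump_grad_def by (simp add: abs_mult)
qed (use k r in \<open>simp add: ball_bump_grad_def\<close>)

lemma ball_bump_C1b:
  fixes c :: "'a::real_inner"
  assumes r: "r > 0" and k: "k \<ge> 0"
  shows "ball_bump c r k \<in> C1b"
proof (rule C1bI(1)[OF ball_bump_has_derivative])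
  show "continuous_on UNIV (ball_bump_grad c r k)"
    unfolding ball_bump_grad_def[abs_def] pos_square_def by (intro continuous_intros)
  show "\<bar>ball_bump c r k x\<bar> \<le> 1" for x
    using ball_bump_bounds[OF k, of c r x] by (simp add: abs_if)
  show "norm (ball_bump_grad c r k x) \<le> 4 * k * r\<^sup>2 * r" for x
    by (rule ball_bump_grad_bound[OF r k])
qed

lemma Union_ball_bump_C1b:
  fixes c :: "nat \<Rightarrow> 'a::real_inner"
  assumes r: "\<And>j. r j > 0" and k: "k \<ge> 0"
  shows "(\<lambda>x. 1 - (\<Prod>j<n. 1 - ball_bump (c j) (r j) k x)) \<in> C1b"
proof -
  have "(\<lambda>x. 1 - ball_bump (c j) (r j) k x) \<in> C1b" for j
    using C1b_diff(1)[OF C1b_const(1) ball_bump_C1b[OF r k]] .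
  then have "(\<lambda>x. \<Prod>j<n. 1 - ball_bump (c j) (r j) k x) \<in> C1b"
    by (rule C1b_prod)
  from C1b_diff(1)[OF C1b_const(1) this] show ?thesis .
qed

lemma ball_bump_tendsto_indicator:
  fixes c :: "'a::real_inner"
  assumes r: "r > 0"
  shows "(\<lambda>n. ball_bump c r (real n) x) \<longlonglongrightarrow> indicator (ball c r) x"
proof (cases "x \<in> ball c r")
  case True
  define m where "m = pos_square (r\<^sup>2 - (x - c) \<bullet> (x - c))"
  have "norm (x - c) < r"
    using True by (simp add: dist_norm norm_minus_commute)
  then have "(x - c) \<bullet> (x - c) < r\<^sup>2" by (simp add: norm_lt_square)
  then have "exp (- m) < 1" by (simp add: m_def pos_square_def)
  then have "(\<lambda>n. 1 - exp (- m) ^ n) \<longlonglongrightarrow> 1 - 0"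
    by (intro tendsto_diff tendsto_const LIMSEQ_power_zero) simp
  moreover have "ball_bump c r (real n) x = 1 - exp (- m) ^ n" for n
    unfolding ball_bump_def m_def by (metis exp_of_nat_mult mult_minus_left mult_minus_right)
  ultimately show ?thesis using True by simp
next
  case False
  then have "\<not> norm (x - c) < r" by (simp add: dist_norm norm_minus_commute)
  then have "\<not> (x - c) \<bullet> (x - c) < r\<^sup>2" using r by (simp add: norm_lt_square)
  then show ?thesis using False by (simp add: ball_bump_def pos_square_def)
qed

lemma prod_one_minus_indicator:
  fixes n :: nat
  shows "(\<Prod>j<n. 1 - indicator (B j) x :: real) = 1 - indicator (\<Union>j<n. B j) x"
  by (induction n) (auto simp: prod.lessThan_Suc indicator_def lessThan_Suc)

lemma open_eq_countable_Union_balls: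
  fixes U :: "'a::{metric_space, second_countable_topology} set"
  assumes U: "open U" "U \<noteq> {}"
  obtains r c where "\<And>j::nat. r j > 0" "U = (\<Union>j. ball (c j) (r j))"
proof -
  define \<B> where "\<B> = {ball c r | c r. r > 0 \<and> ball c r \<subseteq> U}"
  have "U \<subseteq> \<Union>\<B>"
  proof
    fix x assume "x \<in> U"
    then obtain e where "e > 0" "ball x e \<subseteq> U" using U openE by blast
    then show "x \<in> \<Union>\<B>" unfolding \<B>_def by (auto intro!: exI[of _ "ball x e"])
  qed
  then have UB: "\<Union>\<B> = U" unfolding \<B>_def by auto
  obtain \<B>' where B': "\<B>' \<subseteq> \<B>" "countable \<B>'" "\<Union>\<B>' = \<Union>\<B>"
    using Lindelof[of \<B>] unfolding \<B>_def by blast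
  have "\<B>' \<noteq> {}" using B'(3) UB U(2) by auto
  then have rB: "range (from_nat_into \<B>') = \<B>'"
    using range_from_nat_into[OF _ B'(2)] by blast
  have "\<forall>j. \<exists>cr. snd cr > 0 \<and> from_nat_into \<B>' j = ball (fst cr) (snd cr)"
  proof
    fix j
    have "from_nat_into \<B>' j \<in> \<B>" using rB B'(1) by auto
    then show "\<exists>cr. snd cr > 0 \<and> from_nat_into \<B>' j = ball (fst cr) (snd cr)"
      unfolding \<B>_def by force
  qed
  then obtain cr where cr: "\<And>j. snd (cr j) > 0"
      "\<And>j. from_nat_into \<B>' j = ball (fst (cr j)) (snd (cr j))"
    by (metis choice_iff)
  have "U = (\<Union>j. from_nat_into \<B>' j)" using rB B'(3) UB by simp
  also have "\<dots> = (\<Union>j. ball (fst (cr j)) (snd (cr j)))" by (simp only: cr(2))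
  finally show thesis by (rule that[where c="\<lambda>j. fst (cr j)" and r="\<lambda>j. snd (cr j)", OF cr(1)])
qed

lemma integral_indicator_eq_density_diff:
  fixes h :: "'a \<Rightarrow> real"
  assumes h: "integrable M h" and A: "A \<in> sets M"
  defines "N1 \<equiv> density M (\<lambda>x. ennreal (h x))" and "N2 \<equiv> density M (\<lambda>x. ennreal (- h x))"
  shows "(\<integral>x. indicator A x * h x \<partial>M) = enn2real (emeasure N1 A) - enn2real (emeasure N2 A)"
    and "emeasure N1 A \<noteq> \<infinity>" "emeasure N2 A \<noteq> \<infinity>"
proof -
  have [measurable]: "h \<in> borel_measurable M" using h by auto
  have e1: "emeasure N1 A = (\<integral>\<^sup>+x. ennreal (indicator A x * h x) \<partial>M)"
    unfolding N1_def using A by (subst emeasure_density) (auto intro!: nn_integral_cong simp: indicator_def)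
  have e2: "emeasure N2 A = (\<integral>\<^sup>+x. ennreal (- (indicator A x * h x)) \<partial>M)"
    unfolding N2_def using A by (subst emeasure_density) (auto intro!: nn_integral_cong simp: indicator_def)
  have "integrable M (\<lambda>x. indicator A x * h x)"
    using integrable_real_mult_indicator[OF A h] by (simp add: mult.commute)
  then show "(\<integral>x. indicator A x * h x \<partial>M) = enn2real (emeasure N1 A) - enn2real (emeasure N2 A)"
    unfolding e1 e2 by (rule real_lebesgue_integral_def)
  have "emeasure N1 A \<le> (\<integral>\<^sup>+x. ennreal (h x) \<partial>M)"
    unfolding e1 by (intro nn_integral_mono) (auto simp: indicator_def)
  then show "emeasure N1 A \<noteq> \<infinity>" using integrableD(2)[OF h] by (auto simp: top_unique)
  have "emeasure N2 A \<le> (\<integral>\<^sup>+x. ennreal (- h x) \<partial>M)"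
    unfolding e2 by (intro nn_integral_mono) (auto simp: indicator_def)
  then show "emeasure N2 A \<noteq> \<infinity>" using integrableD(3)[OF h] by (auto simp: top_unique)
qed

lemma AE_zero_if_integral_open_eq_0:
  fixes h :: "'a::topological_space \<Rightarrow> real"
  assumes sets: "sets M = sets borel" and "finite_measure M" and h: "integrable M h"
    and open_0: "\<And>U. open U \<Longrightarrow> (\<integral>x. indicator U x * h x \<partial>M) = 0"
  shows "AE x in M. h x = 0"
proof -
  define N1 where "N1 = density M (\<lambda>x. ennreal (h x))"
  define N2 where "N2 = density M (\<lambda>x. ennreal (- h x))"
  note N = integral_indicator_eq_density_diff[OF h, folded N1_def N2_def]
  have "N1 = N2"
  proof (rule measure_eqI_generator_eq[where E="{S. open S}" and \<Omega>=UNIV and A="\<lambda>i. UNIV"])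
    show "Int_stable {S. open S}" by (auto simp: Int_stable_def)
    show "sets N1 = sigma_sets UNIV {S. open S}" "sets N2 = sigma_sets UNIV {S. open S}"
      unfolding N1_def N2_def using sets by (simp_all add: sets_borel)
    show "emeasure N1 UNIV \<noteq> \<infinity>" using N(2) sets by simp
    show "emeasure N1 U = emeasure N2 U" if "U \<in> {S. open S}" for U
    proof -
      have UM: "U \<in> sets M" using that sets by auto
      have "ennreal (enn2real (emeasure N1 U)) = ennreal (enn2real (emeasure N2 U))"
        using N(1)[OF UM] open_0 that by simp
      then show ?thesis using N(2,3)[OF UM] by (simp add: ennreal_enn2real_if)
    qed
  qed auto
  then have "set_lebesgue_integral M A h = 0" if "A \<in> sets M" for A
    unfolding set_lebesgue_integral_def using N(1)[OF that] by simp
  moreover have "sigma_finite_measure M" using \<open>finite_measure M\<close> by (simp add: finite_measure_def)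
  ultimately show ?thesis using sigma_finite_measure.density_zero[OF _ h] by blast
qed

context
  fixes M :: "'a::{real_inner, polish_space} measure" and h :: "'a \<Rightarrow> real"
  assumes sets: "sets M = sets borel" and h: "integrable M h"
    and orth: "\<And>\<psi>. \<psi> \<in> C1b \<Longrightarrow> (\<integral>x. \<psi> x * h x \<partial>M) = 0"
begin

lemma integral_indicator_Union_balls_eq_0:
  fixes c :: "nat \<Rightarrow> 'a" and r :: "nat \<Rightarrow> real"
  assumes r: "\<And>j. r j > 0"
  shows "(\<integral>x. indicator (\<Union>j<n. ball (c j) (r j)) x * h x \<partial>M) = 0"
proof -
  have [measurable]: "h \<in> borel_measurable M" using h by auto
  define \<eta> where "\<eta> k x = 1 - (\<Prod>j<n. 1 - ball_bump (c j) (r j) (real k) x)" for k x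
  have \<eta>: "\<eta> k \<in> C1b" for k
    unfolding \<eta>_def[abs_def] using r by (rule Union_ball_bump_C1b) simp
  have "(\<lambda>k. \<integral>x. \<eta> k x * h x \<partial>M) \<longlonglongrightarrow> (\<integral>x. indicator (\<Union>j<n. ball (c j) (r j)) x * h x \<partial>M)"
  proof (rule integral_dominated_convergence[where w="\<lambda>x. \<bar>h x\<bar>"])
    show "(\<lambda>x. indicator (\<Union>j<n. ball (c j) (r j)) x * h x) \<in> borel_measurable M"
      using sets by (intro borel_measurable_times borel_measurable_indicator) auto
    show "(\<lambda>x. \<eta> k x * h x) \<in> borel_measurable M" for k
      using C1b_borel_measurable[OF sets \<eta>] by measurable
    show "integrable M (\<lambda>x. \<bar>h x\<bar>)" using h by auto
    show "AE x in M. (\<lambda>k. \<eta> k x * h x) \<longlonglongrightarrow> indicator (\<Union>j<n. ball (c j) (r j)) x * h x"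
    proof (rule AE_I2)
      fix x
      have "(\<lambda>k. \<eta> k x * h x) \<longlonglongrightarrow> (1 - (\<Prod>j<n. 1 - indicator (ball (c j) (r j)) x)) * h x"
        unfolding \<eta>_def by (intro tendsto_intros ball_bump_tendsto_indicator r)
      then show "(\<lambda>k. \<eta> k x * h x) \<longlonglongrightarrow> indicator (\<Union>j<n. ball (c j) (r j)) x * h x"
        by (simp add: prod_one_minus_indicator)
    qed
    show "AE x in M. norm (\<eta> k x * h x) \<le> \<bar>h x\<bar>" for k
    proof (rule AE_I2)
      fix x
      have "0 \<le> (\<Prod>j<n. 1 - ball_bump (c j) (r j) (real k) x)"
        "(\<Prod>j<n. 1 - ball_bump (c j) (r j) (real k) x) \<le> 1"
        using ball_bump_bounds[of "real k"] by (auto intro!: prod_nonneg prod_le_1)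
      then show "norm (\<eta> k x * h x) \<le> \<bar>h x\<bar>"
        unfolding \<eta>_def by (auto simp: abs_mult intro!: mult_left_le_one_le)
    qed
  qed
  then show ?thesis using orth[OF \<eta>] by (simp add: LIMSEQ_const_iff)
qed

lemma integral_indicator_open_eq_0:
  assumes U: "open U"
  shows "(\<integral>x. indicator U x * h x \<partial>M) = 0"
proof (cases "U = {}")
  case False
  have [measurable]: "h \<in> borel_measurable M" using h by auto
  obtain r c where r: "\<And>j::nat. r j > 0" and Ueq: "U = (\<Union>j. ball (c j) (r j))"
    by (rule open_eq_countable_Union_balls[OF U False]) (rule that)
  define V where "V n = (\<Union>j<n. ball (c j) (r j))" for n
  have "open (V n)" for n unfolding V_def by (intro open_UN) simp
  then have UM: "U \<in> sets M" and VM: "V n \<in> sets M" for n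
    using U sets by simp_all
  have "(\<lambda>n. \<integral>x. indicator (V n) x * h x \<partial>M) \<longlonglongrightarrow> (\<integral>x. indicator U x * h x \<partial>M)"
  proof (rule integral_dominated_convergence[where w="\<lambda>x. \<bar>h x\<bar>"])
    show "(\<lambda>x. indicator U x * h x) \<in> borel_measurable M"
      using UM by measurable
    show "(\<lambda>x. indicator (V n) x * h x) \<in> borel_measurable M" for n
      using VM by measurable
    show "integrable M (\<lambda>x. \<bar>h x\<bar>)" using h by auto
    show "AE x in M. (\<lambda>n. indicator (V n) x * h x) \<longlonglongrightarrow> indicator U x * h x"
    proof (rule AE_I2)
      fix x
      have "eventually (\<lambda>n. indicator (V n) x * h x = indicator U x * h x) sequentially"
      proof (cases "x \<in> U")
        case True
        then obtain j where "x \<in> ball (c j) (r j)" using Ueq by auto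
        then have "\<forall>n\<ge>Suc j. x \<in> V n" unfolding V_def by auto
        then show ?thesis using True unfolding eventually_sequentially by (intro exI[of _ "Suc j"]) auto
      next
        case False
        then have "x \<notin> V n" for n unfolding V_def Ueq by blast
        then show ?thesis using False by simp
      qed
      then show "(\<lambda>n. indicator (V n) x * h x) \<longlonglongrightarrow> indicator U x * h x"
        by (rule tendsto_eventually)
    qed
    show "AE x in M. norm (indicator (V n) x * h x) \<le> \<bar>h x\<bar>" for n
      by (auto simp: indicator_def)
  qed
  then show ?thesis
    using integral_indicator_Union_balls_eq_0[OF r] unfolding V_def by (simp add: LIMSEQ_const_iff)
qed simp

lemma AE_zero_if_orthogonal_C1b:
  assumes "finite_measure M"
  shows "AE x in M. h x = 0"
  using AE_zero_if_integral_open_eq_0[OF sets assms h integral_indicator_open_eq_0] .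

end

section \<open>Convergence in L^p\<close>

lemma powr_add_le_two_powr:
  fixes x y p :: real
  assumes "x \<ge> 0" "y \<ge> 0" "p > 0"
  shows "(x + y) powr p \<le> 2 powr p * (x powr p + y powr p)"
proof -
  have "(x + y) powr p \<le> (2 * max x y) powr p"
    using assms by (intro powr_mono2) auto
  also have "\<dots> = 2 powr p * max x y powr p" using assms by (simp add: powr_mult)
  also have "max x y powr p \<le> x powr p + y powr p" by (auto simp: max_def)
  then have "2 powr p * max x y powr p \<le> 2 powr p * (x powr p + y powr p)" by simp
  finally show ?thesis .
qed

lemma le_add_powr:
  fixes t d p :: real
  assumes "t \<ge> 0" "d > 0" "p \<ge> 1"
  shows "t \<le> d + d powr (1 - p) * t powr p"
proof (cases "t \<le> d")
  case True
  then show ?thesis by (simp add: add_increasing2)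
next
  case False
  then have "t = t powr (1 - p) * t powr p" using assms by (simp add: powr_add[symmetric])
  also have "\<dots> \<le> d powr (1 - p) * t powr p"
    using False assms by (intro mult_right_mono powr_mono2') auto
  finally show ?thesis using assms by linarith
qed

lemma Lp_conv_iff_diff_zero: "Lp_conv M p F f \<longleftrightarrow> Lp_conv M p (\<lambda>n x. F n x - f x) (\<lambda>x. 0)"
  by (simp add: Lp_conv_def)

lemma Lp_conv_subseq:
  assumes "Lp_conv M p F f" "strict_mono r"
  shows "Lp_conv M p (\<lambda>n. F (r n)) f"
  using LIMSEQ_subseq_LIMSEQ[OF assms[unfolded Lp_conv_def]] unfolding Lp_conv_def by (simp add: comp_def)

lemma Lp_conv_cong_AE:
  assumes "Lp_conv M p F f" "\<And>n. AE x in M. F n x - f x = F' n x - f' x"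
  shows "Lp_conv M p F' f'"
proof -
  have "(\<integral>\<^sup>+ x. ennreal (norm (F n x - f x) powr p) \<partial>M) = (\<integral>\<^sup>+ x. ennreal (norm (F' n x - f' x) powr p) \<partial>M)" for n
    using assms(2)[of n] by (intro nn_integral_cong_AE) auto
  then show ?thesis using assms(1) unfolding Lp_conv_def by simp
qed

lemma Lp_conv_mono_AE:
  assumes "Lp_conv M p F f" "\<And>n. AE x in M. norm (F' n x - f' x) \<le> norm (F n x - f x)" "p > 0"
  shows "Lp_conv M p F' f'"
proof -
  have le: "(\<integral>\<^sup>+ x. ennreal (norm (F' n x - f' x) powr p) \<partial>M) \<le> (\<integral>\<^sup>+ x. ennreal (norm (F n x - f x) powr p) \<partial>M)" for n
    using assms(2)[of n]
    by (intro nn_integral_mono_AE) (auto elim!: eventually_mono intro: powr_mono2 simp: assms(3) less_imp_le)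
  show ?thesis using assms(1) unfolding Lp_conv_def
    by (rule tendsto_sandwich[rotated 2, OF tendsto_const]) (use le in auto)
qed

lemma Lp_conv_const_zero:
  assumes "AE x in M. f x = 0"
  shows "Lp_conv M p (\<lambda>n x. 0) f"
proof -
  have "(\<integral>\<^sup>+ x. ennreal (norm (0 - f x) powr p) \<partial>M) = (\<integral>\<^sup>+ x. 0 \<partial>M)"
    using assms by (intro nn_integral_cong_AE) (auto elim: eventually_mono)
  then show ?thesis unfolding Lp_conv_def by simp
qed

lemma Lp_conv_zero_add:
  fixes A B :: "nat \<Rightarrow> 'a \<Rightarrow> 'b::{real_normed_vector, second_countable_topology}"
  assumes p: "p > 0"
    and [measurable]: "\<And>n. A n \<in> borel_measurable M" "\<And>n. B n \<in> borel_measurable M"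
    and a: "Lp_conv M p A (\<lambda>x. 0)" and b: "Lp_conv M p B (\<lambda>x. 0)"
  shows "Lp_conv M p (\<lambda>n x. A n x + B n x) (\<lambda>x. 0)"
proof -
  let ?IA = "\<lambda>n. \<integral>\<^sup>+ x. ennreal (norm (A n x) powr p) \<partial>M"
  let ?IB = "\<lambda>n. \<integral>\<^sup>+ x. ennreal (norm (B n x) powr p) \<partial>M"
  have le: "(\<integral>\<^sup>+ x. ennreal (norm (A n x + B n x) powr p) \<partial>M) \<le> ennreal (2 powr p) * (?IA n + ?IB n)" for n
  proof -
    have "(\<integral>\<^sup>+ x. ennreal (norm (A n x + B n x) powr p) \<partial>M)
        \<le> (\<integral>\<^sup>+ x. ennreal (2 powr p) * (ennreal (norm (A n x) powr p) + ennreal (norm (B n x) powr p)) \<partial>M)"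
    proof (intro nn_integral_mono)
      fix x
      have "norm (A n x + B n x) powr p \<le> (norm (A n x) + norm (B n x)) powr p"
        using p by (intro powr_mono2 norm_triangle_ineq) auto
      also have "\<dots> \<le> 2 powr p * (norm (A n x) powr p + norm (B n x) powr p)"
        using p by (intro powr_add_le_two_powr) auto
      finally show "ennreal (norm (A n x + B n x) powr p)
          \<le> ennreal (2 powr p) * (ennreal (norm (A n x) powr p) + ennreal (norm (B n x) powr p))"
        by (simp add: ennreal_mult[symmetric] ennreal_plus[symmetric] del: ennreal_plus)
    qed
    also have "\<dots> = ennreal (2 powr p) * (?IA n + ?IB n)"
      by (simp add: nn_integral_cmult nn_integral_add)
    finally show ?thesis .
  qed
  have "(\<lambda>n. ennreal (2 powr p) * (?IA n + ?IB n)) \<longlonglongrightarrow> ennreal (2 powr p) * (0 + 0)"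
    using a b unfolding Lp_conv_def by (intro ennreal_tendsto_cmult tendsto_add) auto
  then have "(\<lambda>n. ennreal (2 powr p) * (?IA n + ?IB n)) \<longlonglongrightarrow> 0" by simp
  then show ?thesis unfolding Lp_conv_def
    by (rule tendsto_sandwich[rotated 2, OF tendsto_const]) (use le in auto)
qed

lemma Lp_conv_add:
  fixes A B :: "nat \<Rightarrow> 'a \<Rightarrow> 'b::{real_normed_vector, second_countable_topology}"
  assumes p: "p > 0"
    and [measurable]: "\<And>n. A n \<in> borel_measurable M" "\<And>n. B n \<in> borel_measurable M"
      "a \<in> borel_measurable M" "b \<in> borel_measurable M"
    and "Lp_conv M p A a" "Lp_conv M p B b"
  shows "Lp_conv M p (\<lambda>n x. A n x + B n x) (\<lambda>x. a x + b x)"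
proof -
  have "Lp_conv M p (\<lambda>n x. (A n x - a x) + (B n x - b x)) (\<lambda>x. 0)"
    using assms(6,7) unfolding Lp_conv_iff_diff_zero[of M p _ a] Lp_conv_iff_diff_zero[of M p _ b]
    by (intro Lp_conv_zero_add[OF p]) auto
  then show ?thesis
    by (rule Lp_conv_cong_AE) (simp add: algebra_simps)
qed

lemma Lp_conv_diff:
  fixes A B :: "nat \<Rightarrow> 'a \<Rightarrow> 'b::{real_normed_vector, second_countable_topology}"
  assumes p: "p > 0"
    and [measurable]: "\<And>n. A n \<in> borel_measurable M" "\<And>n. B n \<in> borel_measurable M"
      "a \<in> borel_measurable M" "b \<in> borel_measurable M"
    and "Lp_conv M p A a" "Lp_conv M p B b"
  shows "Lp_conv M p (\<lambda>n x. A n x - B n x) (\<lambda>x. a x - b x)"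
proof -
  have "Lp_conv M p (\<lambda>n x. - B n x) (\<lambda>x. - b x)"
    by (rule Lp_conv_mono_AE[OF assms(7) _ p]) (simp add: norm_minus_commute)
  from Lp_conv_add[OF p _ _ _ _ assms(6) this] show ?thesis by simp
qed

lemma Lp_conv_zero_scaleR_bounded:
  fixes H :: "nat \<Rightarrow> 'a \<Rightarrow> 'b::{real_normed_vector, second_countable_topology}"
  assumes p: "p > 0" and C: "C \<ge> 0" and [measurable]: "\<And>n. H n \<in> borel_measurable M"
    and h: "Lp_conv M p H (\<lambda>x. 0)"
    and c: "\<And>n. AE x in M. \<bar>c n x\<bar> \<le> C"
  shows "Lp_conv M p (\<lambda>n x. c n x *\<^sub>R H n x) (\<lambda>x. 0)"
proof -
  let ?I = "\<lambda>n. \<integral>\<^sup>+ x. ennreal (norm (H n x) powr p) \<partial>M"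
  have le: "(\<integral>\<^sup>+ x. ennreal (norm (c n x *\<^sub>R H n x) powr p) \<partial>M) \<le> ennreal (C powr p) * ?I n" for n
  proof -
    have "(\<integral>\<^sup>+ x. ennreal (norm (c n x *\<^sub>R H n x) powr p) \<partial>M)
        \<le> (\<integral>\<^sup>+ x. ennreal (C powr p) * ennreal (norm (H n x) powr p) \<partial>M)"
    proof (intro nn_integral_mono_AE)
      show "AE x in M. ennreal (norm (c n x *\<^sub>R H n x) powr p) \<le> ennreal (C powr p) * ennreal (norm (H n x) powr p)"
        using c[of n]
      proof eventually_elim
        case (elim x)
        have "norm (c n x *\<^sub>R H n x) powr p = \<bar>c n x\<bar> powr p * norm (H n x) powr p"
          by (simp add: powr_mult)
        also have "\<dots> \<le> C powr p * norm (H n x) powr p"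
          using elim p by (intro mult_right_mono powr_mono2) auto
        finally show ?case by (simp add: ennreal_mult[symmetric])
      qed
    qed
    also have "\<dots> = ennreal (C powr p) * ?I n" by (simp add: nn_integral_cmult)
    finally show ?thesis .
  qed
  have "(\<lambda>n. ennreal (C powr p) * ?I n) \<longlonglongrightarrow> ennreal (C powr p) * 0"
    using h unfolding Lp_conv_def by (intro ennreal_tendsto_cmult) auto
  then have "(\<lambda>n. ennreal (C powr p) * ?I n) \<longlonglongrightarrow> 0" by simp
  then show ?thesis unfolding Lp_conv_def
    by (rule tendsto_sandwich[rotated 2, OF tendsto_const]) (use le in auto)
qed

lemma Lp_conv_zero_dominated:
  fixes H :: "nat \<Rightarrow> 'a \<Rightarrow> 'b::{real_normed_vector, second_countable_topology}"
  assumes p: "p > 0"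
    and [measurable]: "\<And>n. H n \<in> borel_measurable M" "w \<in> borel_measurable M"
    and bd: "\<And>n. AE x in M. norm (H n x) \<le> w x"
    and wi: "integrable M (\<lambda>x. w x powr p)"
    and lim: "AE x in M. (\<lambda>n. H n x) \<longlonglongrightarrow> 0"
  shows "Lp_conv M p H (\<lambda>x. 0)"
proof -
  have "(\<lambda>i. (\<integral>\<^sup>+x. norm (0 - norm (H i x) powr p) \<partial>M)) \<longlonglongrightarrow> 0"
  proof (rule nn_integral_dominated_convergence_norm[where w="\<lambda>x. w x powr p"])
    show "AE x in M. norm (norm (H j x) powr p) \<le> w x powr p" for j
      using bd[of j] by eventually_elim (use p in \<open>auto intro: powr_mono2\<close>)
    show "(\<integral>\<^sup>+x. ennreal (w x powr p) \<partial>M) < \<infinity>"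
      using integrableD(2)[OF wi] by (simp add: less_top)
    show "AE x in M. (\<lambda>i. norm (H i x) powr p) \<longlonglongrightarrow> 0"
      using lim
    proof eventually_elim
      case (elim x)
      then have "(\<lambda>i. norm (H i x)) \<longlonglongrightarrow> 0" using tendsto_norm_zero by blast
      then show ?case using p by (intro tendsto_zero_powrI) auto
    qed
  qed auto
  then show ?thesis unfolding Lp_conv_def by simp
qed

lemma scaleR_split_diff:
  fixes V v :: "'a::real_vector"
  shows "U *\<^sub>R (V - v) + (U - u) *\<^sub>R v = U *\<^sub>R V - u *\<^sub>R v"
  by (simp add: scaleR_diff_left scaleR_diff_right)

lemma Lp_conv_scaleR:
  fixes V :: "nat \<Rightarrow> 'a \<Rightarrow> 'b::{real_normed_vector, second_countable_topology}"
  assumes p: "p > 0"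
    and [measurable]: "\<And>n. U n \<in> borel_measurable M" "u \<in> borel_measurable M"
      "\<And>n. V n \<in> borel_measurable M" "v \<in> borel_measurable M"
    and Ub: "\<And>n x. \<bar>U n x\<bar> \<le> C" and ub: "AE x in M. \<bar>u x\<bar> \<le> C"
    and Uu: "AE x in M. (\<lambda>n. U n x) \<longlonglongrightarrow> u x"
    and Vv: "Lp_conv M p V v" and v: "in_Lp M p v"
  shows "Lp_conv M p (\<lambda>n x. U n x *\<^sub>R V n x) (\<lambda>x. u x *\<^sub>R v x)"
proof -
  have C0: "C \<ge> 0" using Ub[of 0 undefined] by simp
  have T1: "Lp_conv M p (\<lambda>n x. U n x *\<^sub>R (V n x - v x)) (\<lambda>x. 0)"
    by (rule Lp_conv_zero_scaleR_bounded[OF p C0 _ Vv[unfolded Lp_conv_iff_diff_zero[of M p V v]]]) (use Ub in auto)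
  have T2: "Lp_conv M p (\<lambda>n x. (U n x - u x) *\<^sub>R v x) (\<lambda>x. 0)"
  proof (rule Lp_conv_zero_dominated[OF p, where w="\<lambda>x. (2 * C) * norm (v x)"])
    show "AE x in M. norm ((U n x - u x) *\<^sub>R v x) \<le> 2 * C * norm (v x)" for n
      using ub
    proof eventually_elim
      case (elim x)
      have "\<bar>U n x - u x\<bar> \<le> 2 * C" using Ub[of n x] elim by linarith
      then show ?case by (simp add: mult_right_mono)
    qed
    show "integrable M (\<lambda>x. (2 * C * norm (v x)) powr p)"
      using v C0 by (simp add: in_Lp_def powr_mult)
    show "AE x in M. (\<lambda>n. (U n x - u x) *\<^sub>R v x) \<longlonglongrightarrow> 0"
      using Uu
    proof eventually_elim
      case (elim x)
      have "(\<lambda>n. (U n x - u x) *\<^sub>R v x) \<longlonglongrightarrow> (u x - u x) *\<^sub>R v x"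
        by (intro tendsto_intros elim)
      then show ?case by simp
    qed
  qed measurable
  have "Lp_conv M p (\<lambda>n x. U n x *\<^sub>R (V n x - v x) + (U n x - u x) *\<^sub>R v x) (\<lambda>x. 0)"
    by (rule Lp_conv_zero_add[OF p _ _ T1 T2]) measurable
  then show ?thesis
    by (rule Lp_conv_cong_AE) (simp add: scaleR_split_diff)
qed

lemma Lp_conv_AE_subseq:
  fixes F :: "nat \<Rightarrow> 'a \<Rightarrow> 'b::{real_normed_vector, second_countable_topology}"
  assumes p: "p > 0" and conv: "Lp_conv M p F f"
    and meas: "\<And>n. (\<lambda>x. F n x - f x) \<in> borel_measurable M"
  obtains r where "strict_mono r" "AE x in M. (\<lambda>n. F (r n) x) \<longlonglongrightarrow> f x"
proof -
  define d where "d n x = norm (F n x - f x) powr p" for n x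
  have dm[measurable]: "d n \<in> borel_measurable M" for n unfolding d_def using meas[of n] by measurable
  have I0: "(\<lambda>n. \<integral>\<^sup>+ x. ennreal (d n x) \<partial>M) \<longlonglongrightarrow> 0"
    using conv unfolding Lp_conv_def d_def .
  obtain N where N: "\<And>n. n \<ge> N \<Longrightarrow> (\<integral>\<^sup>+ x. ennreal (d n x) \<partial>M) < \<infinity>"
    using order_tendstoD(2)[OF I0, of \<infinity>] by (auto simp: eventually_sequentially)
  have int: "integrable M (d (n + N))" for n
    using N[of "n + N"] by (simp add: integrable_iff_bounded d_def)
  have "(\<lambda>n. enn2real (\<integral>\<^sup>+ x. ennreal (d (n + N) x) \<partial>M)) \<longlonglongrightarrow> 0"
    using tendsto_enn2real[of "\<lambda>n. \<integral>\<^sup>+ x. ennreal (d (n + N) x) \<partial>M" 0]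
      LIMSEQ_ignore_initial_segment[OF I0, of N] by simp
  moreover have "(\<integral>x. norm (d (n + N) x) \<partial>M) = enn2real (\<integral>\<^sup>+ x. ennreal (d (n + N) x) \<partial>M)" for n
  proof -
    have "(\<integral>x. norm (d (n + N) x) \<partial>M) = (\<integral>x. d (n + N) x \<partial>M)" by (simp add: d_def)
    also have "\<dots> = enn2real (\<integral>\<^sup>+ x. ennreal (d (n + N) x) \<partial>M)"
      by (rule integral_eq_nn_integral[OF dm]) (simp add: d_def)
    finally show ?thesis .
  qed
  ultimately have "(\<lambda>n. \<integral>x. norm (d (n + N) x) \<partial>M) \<longlonglongrightarrow> 0" by simp
  then obtain r where r: "strict_mono r" and rAE: "AE x in M. (\<lambda>n. d (r n + N) x) \<longlonglongrightarrow> 0"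
    using tendsto_L1_AE_subseq[where u="\<lambda>n. d (n + N)", OF int] by blast
  show thesis
  proof (rule that)
    show "strict_mono (\<lambda>n. r n + N)" using r by (simp add: strict_mono_def)
    show "AE x in M. (\<lambda>n. F (r n + N) x) \<longlonglongrightarrow> f x"
      using rAE
    proof eventually_elim
      case (elim x)
      have "(\<lambda>n. d (r n + N) x powr (1 / p)) \<longlonglongrightarrow> 0"
        using p by (intro tendsto_zero_powrI[OF elim tendsto_const]) (auto simp: d_def)
      then have "(\<lambda>n. norm (F (r n + N) x - f x)) \<longlonglongrightarrow> 0"
        using p by (simp add: d_def powr_powr)
      then show ?case by (simp add: LIM_zero_iff tendsto_norm_zero_iff)
    qed
  qed
qed

lemma nn_integral_norm_le_powr:
  fixes f :: "'a \<Rightarrow> 'b::real_normed_vector"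
  assumes "prob_space M" and p: "p \<ge> 1" and d: "d > 0" and [measurable]: "f \<in> borel_measurable M"
  shows "(\<integral>\<^sup>+ x. ennreal (norm (f x)) \<partial>M)
    \<le> ennreal d + ennreal (d powr (1 - p)) * (\<integral>\<^sup>+ x. ennreal (norm (f x) powr p) \<partial>M)"
proof -
  interpret prob_space M by fact
  have "(\<integral>\<^sup>+ x. ennreal (norm (f x)) \<partial>M)
      \<le> (\<integral>\<^sup>+ x. ennreal d + ennreal (d powr (1 - p)) * ennreal (norm (f x) powr p) \<partial>M)"
  proof (rule nn_integral_mono)
    fix x
    have "ennreal (norm (f x)) \<le> ennreal (d + d powr (1 - p) * norm (f x) powr p)"
      using le_add_powr[OF norm_ge_zero d p] by (rule ennreal_leI)
    then show "ennreal (norm (f x)) \<le> ennreal d + ennreal (d powr (1 - p)) * ennreal (norm (f x) powr p)"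
      using d by (simp add: ennreal_mult ennreal_plus)
  qed
  also have "\<dots> = ennreal d + ennreal (d powr (1 - p)) * (\<integral>\<^sup>+ x. ennreal (norm (f x) powr p) \<partial>M)"
    by (simp add: nn_integral_add nn_integral_cmult emeasure_space_1)
  finally show ?thesis .
qed

lemma Lp_conv_zero_imp_L1:
  fixes H :: "nat \<Rightarrow> 'a \<Rightarrow> 'b::{real_normed_vector, second_countable_topology}"
  assumes P: "prob_space M" and p: "p \<ge> 1"
    and [measurable]: "\<And>n. H n \<in> borel_measurable M"
    and conv: "Lp_conv M p H (\<lambda>x. 0)"
  shows "(\<lambda>n. \<integral>\<^sup>+ x. ennreal (norm (H n x)) \<partial>M) \<longlonglongrightarrow> 0"
proof -
  define I where "I n = (\<integral>\<^sup>+ x. ennreal (norm (H n x) powr p) \<partial>M)" for n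
  have I0: "I \<longlonglongrightarrow> 0" using conv unfolding Lp_conv_def I_def by simp
  define y where "y n = enn2real (I n)" for n
  have y0: "y \<longlonglongrightarrow> 0" unfolding y_def using tendsto_enn2real[of I 0] I0 by simp
  have y_nn: "y n \<ge> 0" for n by (simp add: y_def)
  define \<delta> where "\<delta> n = y n powr (1 / p) + inverse (real (Suc n))" for n
  have \<delta>pos: "\<delta> n > 0" for n unfolding \<delta>_def by (intro add_nonneg_pos) auto
  have "(\<lambda>n. y n powr (1 / p)) \<longlonglongrightarrow> 0"
    using p y_nn by (intro tendsto_zero_powrI[OF y0 tendsto_const]) auto
  from tendsto_add[OF this LIMSEQ_inverse_real_of_nat]
  have "(\<lambda>n. ennreal (2 * \<delta> n)) \<longlonglongrightarrow> ennreal (2 * 0)"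
    unfolding \<delta>_def by (intro tendsto_ennrealI tendsto_mult tendsto_const) simp
  then have lim: "(\<lambda>n. ennreal (2 * \<delta> n)) \<longlonglongrightarrow> 0" by simp
  have bound: "(\<integral>\<^sup>+ x. ennreal (norm (H n x)) \<partial>M) \<le> ennreal (2 * \<delta> n)" if fin: "I n < \<infinity>" for n
  proof -
    have "y n = (y n powr (1 / p)) powr p" using p y_nn by (simp add: powr_powr)
    also have "\<dots> \<le> \<delta> n powr p" unfolding \<delta>_def using p y_nn by (intro powr_mono2) auto
    finally have y_le: "y n \<le> \<delta> n powr p" .
    have "(\<integral>\<^sup>+ x. ennreal (norm (H n x)) \<partial>M) \<le> ennreal (\<delta> n) + ennreal (\<delta> n powr (1 - p)) * I n"
      unfolding I_def by (rule nn_integral_norm_le_powr[OF P p \<delta>pos]) measurable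
    also have "I n = ennreal (y n)" using fin by (simp add: y_def)
    also have "ennreal (\<delta> n) + ennreal (\<delta> n powr (1 - p)) * ennreal (y n)
        \<le> ennreal (\<delta> n) + ennreal (\<delta> n powr (1 - p)) * ennreal (\<delta> n powr p)"
      using y_le by (intro add_left_mono mult_left_mono ennreal_leI) auto
    also have "\<dots> = ennreal (2 * \<delta> n)"
      using \<delta>pos[of n]
      by (simp add: ennreal_mult[symmetric] ennreal_plus[symmetric] powr_add[symmetric] del: ennreal_plus)
    finally show ?thesis .
  qed
  have ev: "eventually (\<lambda>n. I n < \<infinity>) sequentially"
    by (rule order_tendstoD(2)[OF I0]) simp
  from lim show ?thesis
    by (rule tendsto_sandwich[rotated 2, OF tendsto_const]) (use ev bound in \<open>auto elim: eventually_mono\<close>)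
qed

lemma in_Lp_add:
  fixes f g :: "'a \<Rightarrow> 'b::{real_normed_vector, second_countable_topology}"
  assumes p: "p > 0" and f: "in_Lp M p f" and g: "in_Lp M p g"
  shows "in_Lp M p (\<lambda>x. f x + g x)"
proof -
  have [measurable]: "f \<in> borel_measurable M" "g \<in> borel_measurable M" using f g by (auto simp: in_Lp_def)
  have i: "integrable M (\<lambda>x. 2 powr p * (norm (f x) powr p + norm (g x) powr p))"
    using f g by (intro integrable_mult_right Bochner_Integration.integrable_add) (auto simp: in_Lp_def)
  have "integrable M (\<lambda>x. norm (f x + g x) powr p)"
  proof (rule Bochner_Integration.integrable_bound[OF i])
    show "AE x in M. norm (norm (f x + g x) powr p) \<le> norm (2 powr p * (norm (f x) powr p + norm (g x) powr p))"
    proof (rule AE_I2)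
      fix x
      have "norm (f x + g x) powr p \<le> (norm (f x) + norm (g x)) powr p"
        using p by (intro powr_mono2 norm_triangle_ineq) auto
      also have "\<dots> \<le> 2 powr p * (norm (f x) powr p + norm (g x) powr p)"
        using p by (intro powr_add_le_two_powr) auto
      finally show "norm (norm (f x + g x) powr p) \<le> norm (2 powr p * (norm (f x) powr p + norm (g x) powr p))"
        by simp
    qed
  qed measurable
  then show ?thesis unfolding in_Lp_def by simp
qed

lemma in_Lp_scaleR:
  fixes f :: "'a \<Rightarrow> 'b::{real_normed_vector, second_countable_topology}"
  assumes p: "p > 0" and f: "in_Lp M p f" and c[measurable]: "c \<in> borel_measurable M"
    and cb: "AE x in M. \<bar>c x\<bar> \<le> C"
  shows "in_Lp M p (\<lambda>x. c x *\<^sub>R f x)"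
proof -
  have [measurable]: "f \<in> borel_measurable M" using f by (auto simp: in_Lp_def)
  have i: "integrable M (\<lambda>x. \<bar>C\<bar> powr p * norm (f x) powr p)"
    using f by (intro integrable_mult_right) (auto simp: in_Lp_def)
  have "integrable M (\<lambda>x. norm (c x *\<^sub>R f x) powr p)"
  proof (rule Bochner_Integration.integrable_bound[OF i])
    show "AE x in M. norm (norm (c x *\<^sub>R f x) powr p) \<le> norm (\<bar>C\<bar> powr p * norm (f x) powr p)"
      using cb
    proof eventually_elim
      case (elim x)
      have "norm (c x *\<^sub>R f x) powr p = \<bar>c x\<bar> powr p * norm (f x) powr p" by (simp add: powr_mult)
      also have "\<dots> \<le> \<bar>C\<bar> powr p * norm (f x) powr p"
        using elim p by (intro mult_right_mono powr_mono2) auto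
      finally show ?case by simp
    qed
  qed measurable
  then show ?thesis unfolding in_Lp_def by simp
qed

lemma in_Lp_bounded:
  fixes f :: "'a \<Rightarrow> real"
  assumes "finite_measure M" and [measurable]: "f \<in> borel_measurable M"
    and b: "AE x in M. \<bar>f x\<bar> \<le> C" and p: "p > 0"
  shows "in_Lp M p f"
proof -
  interpret finite_measure M by fact
  have "integrable M (\<lambda>x. norm (f x) powr p)"
  proof (rule integrable_const_bound[where B="\<bar>C\<bar> powr p"])
    show "AE x in M. norm (norm (f x) powr p) \<le> \<bar>C\<bar> powr p"
      using b by eventually_elim (use p in \<open>auto intro!: powr_mono2\<close>)
  qed measurable
  then show ?thesis unfolding in_Lp_def by simp
qed

lemma in_Lp_integrable_norm:
  assumes "finite_measure M" and q: "1 \<le> q" and L: "in_Lp M q f"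
  shows "integrable M (\<lambda>x. norm (f x))"
proof -
  interpret finite_measure M by fact
  have [measurable]: "f \<in> borel_measurable M" using L by (simp add: in_Lp_def)
  have "integrable M (\<lambda>x. 1 + norm (f x) powr q)"
    using L by (intro Bochner_Integration.integrable_add integrable_const) (simp_all add: in_Lp_def)
  then show ?thesis
  proof (rule Bochner_Integration.integrable_bound)
    show "AE x in M. norm (norm (f x)) \<le> norm (1 + norm (f x) powr q)"
      using le_add_powr[of _ 1 q] q by (auto intro!: AE_I2)
  qed measurable
qed

lemma in_Lp_integrable_inner:
  fixes g :: "'a \<Rightarrow> 'b::{real_inner, second_countable_topology}"
  assumes "finite_measure M" and "1 \<le> q" and g: "in_Lp M q g"
  shows "integrable M (\<lambda>x. g x \<bullet> z)"
proof (rule Bochner_Integration.integrable_bound[where f="\<lambda>x. norm (g x) * norm z"])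
  show "integrable M (\<lambda>x. norm (g x) * norm z)"
    using in_Lp_integrable_norm[OF assms] by auto
  show "AE x in M. norm (g x \<bullet> z) \<le> norm (norm (g x) * norm z)"
    by (rule AE_I2) (simp add: Cauchy_Schwarz_ineq2)
  have [measurable]: "g \<in> borel_measurable M" using g by (simp add: in_Lp_def)
  show "(\<lambda>x. g x \<bullet> z) \<in> borel_measurable M" by measurable
qed

lemma integrable_bounded_mult:
  fixes f :: "'a \<Rightarrow> real"
  assumes "integrable M f" "\<psi> \<in> borel_measurable M" "\<And>x. \<bar>\<psi> x\<bar> \<le> B"
  shows "integrable M (\<lambda>x. \<psi> x * f x)"
proof (rule Bochner_Integration.integrable_bound[where f="\<lambda>x. B * \<bar>f x\<bar>"])
  have "B \<ge> 0" using assms(3)[of undefined] by linarith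
  then show "AE x in M. norm (\<psi> x * f x) \<le> norm (B * \<bar>f x\<bar>)"
    using assms(3) by (intro AE_I2) (simp add: abs_mult mult_right_mono)
qed (use assms in auto)

section \<open>Closability of R\<nabla>\<close>

lemma C1b_R_grad_inner_bounded:
  assumes "f \<in> C1b"
  obtains B where "\<And>x. \<bar>blinfun_apply R (grad f x) \<bullet> z\<bar> \<le> B"
proof -
  obtain C where C: "\<And>x. norm (blinfun_apply R (grad f x)) \<le> C"
    using C1b_R_grad_bounded[OF assms] by metis
  have "\<bar>blinfun_apply R (grad f x) \<bullet> z\<bar> \<le> C * norm z" for x
    using Cauchy_Schwarz_ineq2[of "blinfun_apply R (grad f x)" z] C[of x]
    by (meson mult_right_mono norm_ge_zero order_trans)
  then show thesis by (rule that)
qed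

lemma AE_eq_0_if_AE_inner_eq_0:
  fixes g :: "'b \<Rightarrow> 'a::{real_inner, second_countable_topology}"
  assumes "\<And>z. AE x in M. g x \<bullet> z = 0"
  shows "AE x in M. g x = 0"
proof -
  obtain D :: "'a set" where D: "countable D" "\<And>X. open X \<Longrightarrow> X \<noteq> {} \<Longrightarrow> \<exists>d\<in>D. d \<in> X"
    using countable_dense_exists by blast
  have "AE x in M. \<forall>z\<in>D. g x \<bullet> z = 0"
    by (rule AE_ball_countable'[OF _ D(1)]) (rule assms)
  then show ?thesis
  proof eventually_elim
    case (elim x)
    show ?case
    proof (rule ccontr)
      assume "g x \<noteq> 0"
      then obtain d where d: "d \<in> D" "d \<in> ball (g x) (norm (g x))"
        using D(2)[of "ball (g x) (norm (g x))"] by auto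
      have "norm (g x - d)^2 = norm (g x)^2 + norm d^2"
        using elim d(1) by (simp add: power2_norm_eq_inner inner_diff_left inner_diff_right inner_commute)
      then have "norm (g x)^2 \<le> norm (g x - d)^2" by simp
      then have "norm (g x) \<le> norm (g x - d)" by (rule power2_le_imp_le) simp
      moreover have "norm (g x - d) < norm (g x)" using d(2) by (simp add: dist_norm)
      ultimately show False by simp
    qed
  qed
qed

lemma integral_mult_tendsto_zero:
  fixes w :: "'a \<Rightarrow> real"
  assumes w: "integrable M w" and [measurable]: "\<And>n. \<Phi> n \<in> borel_measurable M"
    and K: "\<And>n x. \<bar>\<Phi> n x\<bar> \<le> K" and \<Phi>0: "AE x in M. (\<lambda>n. \<Phi> n x) \<longlonglongrightarrow> 0"
  shows "(\<lambda>n. \<integral>x. \<Phi> n x * w x \<partial>M) \<longlonglongrightarrow> 0"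
proof -
  have [measurable]: "w \<in> borel_measurable M" using w by auto
  have "(\<lambda>n. \<integral>x. \<Phi> n x * w x \<partial>M) \<longlonglongrightarrow> (\<integral>x. 0 \<partial>M)"
  proof (rule integral_dominated_convergence[where w="\<lambda>x. K * \<bar>w x\<bar>"])
    show "integrable M (\<lambda>x. K * \<bar>w x\<bar>)" using w by auto
    show "AE x in M. (\<lambda>n. \<Phi> n x * w x) \<longlonglongrightarrow> 0"
      using \<Phi>0 by eventually_elim (rule tendsto_mult_left_zero)
    show "AE x in M. norm (\<Phi> n x * w x) \<le> K * \<bar>w x\<bar>" for n
      using K by (auto simp: abs_mult intro!: mult_right_mono)
  qed measurable
  then show ?thesis by simp
qed

lemma tendsto_integral_mult_inner:
  fixes H :: "nat \<Rightarrow> 'a \<Rightarrow> 'b::{real_inner, second_countable_topology}"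
  assumes L1: "(\<lambda>n. \<integral>\<^sup>+x. ennreal (norm (H n x - g x)) \<partial>M) \<longlonglongrightarrow> 0"
    and [measurable]: "\<And>n. H n \<in> borel_measurable M" "g \<in> borel_measurable M" "\<psi> \<in> borel_measurable M"
    and \<psi>: "\<And>x. \<bar>\<psi> x\<bar> \<le> B"
    and int: "\<And>n. integrable M (\<lambda>x. \<psi> x * (H n x \<bullet> z))" "integrable M (\<lambda>x. \<psi> x * (g x \<bullet> z))"
  shows "(\<lambda>n. \<integral>x. \<psi> x * (H n x \<bullet> z) \<partial>M) \<longlonglongrightarrow> (\<integral>x. \<psi> x * (g x \<bullet> z) \<partial>M)"
proof (rule tendsto_L1_int[OF int])
  have B0: "B \<ge> 0" using \<psi>[of undefined] by simp
  have le: "(\<integral>\<^sup>+x. ennreal (norm (\<psi> x * (H n x \<bullet> z) - \<psi> x * (g x \<bullet> z))) \<partial>M)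
      \<le> ennreal (B * norm z) * (\<integral>\<^sup>+x. ennreal (norm (H n x - g x)) \<partial>M)" for n
  proof -
    have "(\<integral>\<^sup>+x. ennreal (norm (\<psi> x * (H n x \<bullet> z) - \<psi> x * (g x \<bullet> z))) \<partial>M)
        \<le> (\<integral>\<^sup>+x. ennreal (B * norm z) * ennreal (norm (H n x - g x)) \<partial>M)"
    proof (rule nn_integral_mono)
      fix x
      have "norm (\<psi> x * (H n x \<bullet> z) - \<psi> x * (g x \<bullet> z)) = \<bar>\<psi> x\<bar> * \<bar>(H n x - g x) \<bullet> z\<bar>"
        by (simp add: abs_mult inner_diff_left flip: right_diff_distrib)
      also have "\<dots> \<le> B * (norm (H n x - g x) * norm z)"
        using \<psi>[of x] Cauchy_Schwarz_ineq2[of "H n x - g x" z] B0 by (intro mult_mono) auto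
      finally show "ennreal (norm (\<psi> x * (H n x \<bullet> z) - \<psi> x * (g x \<bullet> z)))
          \<le> ennreal (B * norm z) * ennreal (norm (H n x - g x))"
        using B0 by (simp add: ennreal_mult[symmetric] mult_ac ennreal_leI)
    qed
    also have "\<dots> = ennreal (B * norm z) * (\<integral>\<^sup>+x. ennreal (norm (H n x - g x)) \<partial>M)"
      by (rule nn_integral_cmult) measurable
    finally show ?thesis .
  qed
  have "(\<lambda>n. ennreal (B * norm z) * (\<integral>\<^sup>+x. ennreal (norm (H n x - g x)) \<partial>M)) \<longlonglongrightarrow> ennreal (B * norm z) * 0"
    by (rule ennreal_tendsto_cmult[OF _ L1]) simp
  then have "(\<lambda>n. ennreal (B * norm z) * (\<integral>\<^sup>+x. ennreal (norm (H n x - g x)) \<partial>M)) \<longlonglongrightarrow> 0"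
    by simp
  then show "(\<lambda>n. \<integral>\<^sup>+x. ennreal (norm (\<psi> x * (H n x \<bullet> z) - \<psi> x * (g x \<bullet> z))) \<partial>M) \<longlonglongrightarrow> 0"
    by (rule tendsto_sandwich[rotated 2, OF tendsto_const]) (use le in auto)
qed

lemma C1b_integration_by_parts:
  fixes M :: "'a::{real_inner, polish_space} measure" and R :: "'a \<Rightarrow>\<^sub>L 'a"
  assumes sets: "sets M = sets borel" and "finite_measure M"
    and ibp: "\<And>\<phi>. \<phi> \<in> C1b \<Longrightarrow> (\<integral>x. blinfun_apply R (grad \<phi> x) \<bullet> z \<partial>M) = (\<integral>x. v x * \<phi> x \<partial>M)"
    and \<Phi>: "\<Phi> \<in> C1b" and \<psi>: "\<psi> \<in> C1b"
  shows "(\<integral>x. \<psi> x * (blinfun_apply R (grad \<Phi> x) \<bullet> z) \<partial>M)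
    = (\<integral>x. \<Phi> x * (v x * \<psi> x) \<partial>M) - (\<integral>x. \<Phi> x * (blinfun_apply R (grad \<psi> x) \<bullet> z) \<partial>M)"
proof -
  interpret finite_measure M by fact
  have [measurable]: "\<Phi> \<in> borel_measurable M" "\<psi> \<in> borel_measurable M"
      "(\<lambda>x. blinfun_apply R (grad \<Phi> x)) \<in> borel_measurable M"
      "(\<lambda>x. blinfun_apply R (grad \<psi> x)) \<in> borel_measurable M"
    using C1b_borel_measurable[OF sets] C1b_R_grad_borel_measurable[OF sets] \<Phi> \<psi> by blast+
  obtain A B C D where A: "\<And>x. \<bar>\<Phi> x\<bar> \<le> A" and B: "\<And>x. \<bar>\<psi> x\<bar> \<le> B"
    and C: "\<And>x. \<bar>blinfun_apply R (grad \<Phi> x) \<bullet> z\<bar> \<le> C"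
    and D: "\<And>x. \<bar>blinfun_apply R (grad \<psi> x) \<bullet> z\<bar> \<le> D"
    using C1bD(3)[OF \<Phi>] C1bD(3)[OF \<psi>] C1b_R_grad_inner_bounded[OF \<Phi>] C1b_R_grad_inner_bounded[OF \<psi>]
    by metis
  have "0 \<le> A" "0 \<le> B" using A[of undefined] B[of undefined] by linarith+
  have "integrable M (\<lambda>x. \<Phi> x * (blinfun_apply R (grad \<psi> x) \<bullet> z))"
  proof (rule integrable_const_bound[where B="A * D"])
    show "AE x in M. norm (\<Phi> x * (blinfun_apply R (grad \<psi> x) \<bullet> z)) \<le> A * D"
      using \<open>0 \<le> A\<close> by (intro AE_I2) (simp add: abs_mult mult_mono A D)
  qed measurable
  moreover have "integrable M (\<lambda>x. \<psi> x * (blinfun_apply R (grad \<Phi> x) \<bullet> z))"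
  proof (rule integrable_const_bound[where B="B * C"])
    show "AE x in M. norm (\<psi> x * (blinfun_apply R (grad \<Phi> x) \<bullet> z)) \<le> B * C"
      using \<open>0 \<le> B\<close> by (intro AE_I2) (simp add: abs_mult mult_mono B C)
  qed measurable
  ultimately have int: "integrable M (\<lambda>x. \<Phi> x * (blinfun_apply R (grad \<psi> x) \<bullet> z))"
      "integrable M (\<lambda>x. \<psi> x * (blinfun_apply R (grad \<Phi> x) \<bullet> z))" .
  have "(\<integral>x. \<Phi> x * (v x * \<psi> x) \<partial>M) = (\<integral>x. blinfun_apply R (grad (\<lambda>x. \<Phi> x * \<psi> x) x) \<bullet> z \<partial>M)"
    using ibp[OF C1b_mult(1)[OF \<Phi> \<psi>]] by (simp add: mult_ac)
  also have "\<dots> = (\<integral>x. \<Phi> x * (blinfun_apply R (grad \<psi> x) \<bullet> z) + \<psi> x * (blinfun_apply R (grad \<Phi> x) \<bullet> z) \<partial>M)"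
    by (simp add: C1b_mult(2)[OF \<Phi> \<psi>] blinfun.add_right blinfun.scaleR_right inner_add_left)
  also have "\<dots> = (\<integral>x. \<Phi> x * (blinfun_apply R (grad \<psi> x) \<bullet> z) \<partial>M) + (\<integral>x. \<psi> x * (blinfun_apply R (grad \<Phi> x) \<bullet> z) \<partial>M)"
    by (rule Bochner_Integration.integral_add[OF int])
  finally show ?thesis by linarith
qed

section \<open>Bounded elements of W^{1,p}\<close>

lemma Linf_norm_bound:
  assumes "prob_space M" and "in_Linf M \<phi>"
  shows "Linf_norm M \<phi> \<ge> 0" "AE x in M. \<bar>\<phi> x\<bar> \<le> Linf_norm M \<phi>"
proof -
  interpret prob_space M by fact
  obtain C where [measurable]: "\<phi> \<in> borel_measurable M" and C: "AE x in M. \<bar>\<phi> x\<bar> \<le> C"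
    using assms(2) unfolding in_Linf_def by blast
  define E where "E = esssup M (\<lambda>x. ereal \<bar>\<phi> x\<bar>)"
  have ne: "emeasure M (space M) \<noteq> 0" by (simp add: emeasure_space_1)
  have "E \<le> esssup M (\<lambda>x. ereal C)" unfolding E_def
    by (rule esssup_AE_mono) (use C in \<open>auto elim: eventually_mono\<close>)
  then have EC: "E \<le> ereal C" using esssup_const[OF ne, of "ereal C"] by simp
  have "esssup M (\<lambda>x. 0::ereal) \<le> E" unfolding E_def by (rule esssup_AE_mono) auto
  then have E0: "0 \<le> E" using esssup_const[OF ne, of "0::ereal"] by simp
  obtain a where a: "E = ereal a" using EC E0 by (cases E) auto
  have "Linf_norm M \<phi> = a" unfolding Linf_norm_def E_def[symmetric] a by simp
  moreover have "AE x in M. ereal \<bar>\<phi> x\<bar> \<le> E" unfolding E_def by (rule esssup_AE)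
  ultimately show "Linf_norm M \<phi> \<ge> 0" "AE x in M. \<bar>\<phi> x\<bar> \<le> Linf_norm M \<phi>"
    using E0 unfolding a by auto
qed

lemma AE_tendsto_soft_clamp:
  assumes b: "b > 0" and lim: "AE x in M. (\<lambda>n. F n x) \<longlonglongrightarrow> \<phi> x"
    and bd: "AE x in M. \<bar>\<phi> x\<bar> \<le> a"
  shows "AE x in M. (\<lambda>n. soft_clamp a b (F n x)) \<longlonglongrightarrow> \<phi> x
    \<and> (\<lambda>n. soft_clamp' a b (F n x)) \<longlonglongrightarrow> 1"
  using lim bd
proof eventually_elim
  case (elim x)
  have "(\<lambda>n. soft_clamp a b (F n x)) \<longlonglongrightarrow> soft_clamp a b (\<phi> x)"
    using continuous_on_tendsto_compose[OF soft_clamp_continuous[OF b] elim(1)] by simp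
  moreover have "(\<lambda>n. soft_clamp' a b (F n x)) \<longlonglongrightarrow> soft_clamp' a b (\<phi> x)"
    using continuous_on_tendsto_compose[OF soft_clamp'_continuous[OF b] elim(1)] by simp
  ultimately show ?case using soft_clamp_inside[OF b elim(2)] by simp
qed

lemma Lp_conv_soft_clamp:
  assumes p: "p > 0" and a: "a \<ge> 0" and b: "b > 0"
    and conv: "Lp_conv M p F \<phi>" and bd: "AE x in M. \<bar>\<phi> x\<bar> \<le> a"
  shows "Lp_conv M p (\<lambda>n x. soft_clamp a b (F n x)) \<phi>"
proof (rule Lp_conv_mono_AE[OF conv _ p])
  show "AE x in M. norm (soft_clamp a b (F n x) - \<phi> x) \<le> norm (F n x - \<phi> x)" for n
    using bd
  proof eventually_elim
    case (elim x)
    then show ?case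
      using soft_clamp_lipschitz[OF a b, of "F n x" "\<phi> x"] soft_clamp_inside[OF b elim] by simp
  qed
qed

context
  fixes M :: "'a::{real_inner, polish_space} measure" and R :: "'a \<Rightarrow>\<^sub>L 'a" and p :: real
  assumes prob: "prob_space M" and sets: "sets M = sets borel"
    and standing: "\<forall>z. \<exists>v. (\<forall>r>1. in_Lp M r v) \<and>
        (\<forall>\<phi>\<in>C1b. (\<integral>x. blinfun_apply R (grad \<phi> x) \<bullet> z \<partial>M) = (\<integral>x. v x * \<phi> x \<partial>M))"
    and p: "1 < p"
begin

lemma finite_measure_M: "finite_measure M"
  using prob by (simp add: prob_space_def)

lemma C1b_measurable [measurable]:
  assumes "f \<in> C1b"
  shows "f \<in> borel_measurable M" "(\<lambda>x. blinfun_apply R (grad f x)) \<in> borel_measurable M"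
  using C1b_borel_measurable[OF sets assms] C1b_R_grad_borel_measurable[OF sets assms] .

lemma Mp_graph_bounded_approx:
  assumes gr: "Mp_graph M R p \<phi> g" and a: "a \<ge> 0" and b: "b > 0"
    and bd: "AE x in M. \<bar>\<phi> x\<bar> \<le> a"
  obtains G where "\<And>n. G n \<in> C1b" "\<And>n x. \<bar>G n x\<bar> \<le> a + b" "Lp_conv M p G \<phi>"
    "Lp_conv M p (\<lambda>n x. blinfun_apply R (grad (G n) x)) g" "AE x in M. (\<lambda>n. G n x) \<longlonglongrightarrow> \<phi> x"
proof -
  have p0: "p > 0" using p by simp
  obtain F where F: "\<And>n. F n \<in> C1b" and Fc: "Lp_conv M p F \<phi>"
    and Fg: "Lp_conv M p (\<lambda>n x. blinfun_apply R (grad (F n) x)) g"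
    and \<phi>L: "in_Lp M p \<phi>" and gL: "in_Lp M p g"
    using gr unfolding Mp_graph_def by blast
  have [measurable]: "\<phi> \<in> borel_measurable M" "g \<in> borel_measurable M"
    using \<phi>L gL by (auto simp: in_Lp_def)
  note [measurable] = C1b_measurable[OF F]
  have \<theta>'c: "continuous_on UNIV (soft_clamp' a b)" by (rule soft_clamp'_continuous[OF b])
  have [measurable]: "soft_clamp' a b \<in> borel_measurable borel"
    using borel_measurable_continuous_onI[OF \<theta>'c] .
  have "(\<lambda>x. F n x - \<phi> x) \<in> borel_measurable M" for n by measurable
  then obtain r where r: "strict_mono r" and rAE: "AE x in M. (\<lambda>n. F (r n) x) \<longlonglongrightarrow> \<phi> x"
    by (rule Lp_conv_AE_subseq[OF p0 Fc]) (rule that)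
  define G where "G n x = soft_clamp a b (F (r n) x)" for n x
  have \<theta>'b: "\<bar>soft_clamp' a b t\<bar> \<le> 1" for t using soft_clamp'_bounds[OF a b, of t] by auto
  have GC: "G n \<in> C1b" and Gg: "grad (G n) = (\<lambda>x. soft_clamp' a b (F (r n) x) *\<^sub>R grad (F (r n)) x)" for n
    unfolding G_def[abs_def]
    using C1b_compose[OF F soft_clamp_has_derivative[OF b] \<theta>'c soft_clamp_bound[OF a b] \<theta>'b] by auto
  have lim: "AE x in M. (\<lambda>n. G n x) \<longlonglongrightarrow> \<phi> x \<and> (\<lambda>n. soft_clamp' a b (F (r n) x)) \<longlonglongrightarrow> 1"
    unfolding G_def using AE_tendsto_soft_clamp[OF b rAE bd] .
  have "Lp_conv M p (\<lambda>n x. soft_clamp' a b (F (r n) x) *\<^sub>R blinfun_apply R (grad (F (r n)) x))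
      (\<lambda>x. 1 *\<^sub>R g x)"
    using lim by (intro Lp_conv_scaleR[OF p0 _ _ _ _ \<theta>'b _ _ Lp_conv_subseq[OF Fg r] gL])
      (auto elim: eventually_mono)
  then have "Lp_conv M p (\<lambda>n x. blinfun_apply R (grad (G n) x)) g"
    by (rule Lp_conv_cong_AE) (simp add: Gg blinfun.scaleR_right)
  moreover have "Lp_conv M p G \<phi>"
    unfolding G_def using Lp_conv_soft_clamp[OF p0 a b Lp_conv_subseq[OF Fc r] bd] .
  moreover have "\<bar>G n x\<bar> \<le> a + b" for n x
    unfolding G_def using soft_clamp_bound[OF a b] .
  moreover have "AE x in M. (\<lambda>n. G n x) \<longlonglongrightarrow> \<phi> x"
    using lim by (rule eventually_mono) simp
  ultimately show thesis using that GC by blast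
qed

lemma C1b_integrable_R_grad_inner:
  assumes "f \<in> C1b"
  shows "integrable M (\<lambda>x. blinfun_apply R (grad f x) \<bullet> z)"
proof -
  interpret finite_measure M by (rule finite_measure_M)
  note [measurable] = C1b_measurable[OF assms]
  obtain C where "\<And>x. \<bar>blinfun_apply R (grad f x) \<bullet> z\<bar> \<le> C"
    using C1b_R_grad_inner_bounded[OF assms] by metis
  then show ?thesis by (intro integrable_const_bound[where B=C] AE_I2) auto
qed

lemma standing_density:
  fixes z :: 'a
  obtains v where "integrable M v"
    "\<And>\<phi>. \<phi> \<in> C1b \<Longrightarrow> (\<integral>x. blinfun_apply R (grad \<phi> x) \<bullet> z \<partial>M) = (\<integral>x. v x * \<phi> x \<partial>M)"
proof -
  obtain v where vL: "\<And>r. r > 1 \<Longrightarrow> in_Lp M r v"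
    and ibp: "\<And>\<phi>. \<phi> \<in> C1b \<Longrightarrow> (\<integral>x. blinfun_apply R (grad \<phi> x) \<bullet> z \<partial>M) = (\<integral>x. v x * \<phi> x \<partial>M)"
    using standing by metis
  have vm: "v \<in> borel_measurable M" using vL[of 2] by (simp add: in_Lp_def)
  have "integrable M v"
    using in_Lp_integrable_norm[OF finite_measure_M _ vL[of 2]] integrable_norm_iff[OF vm] by simp
  then show thesis using ibp by (rule that)
qed

text \<open>Integrating by parts against the standing assumption shows that \<open>g\<close> is orthogonal
  to \<open>\<psi> z\<close> for all \<open>\<psi> \<in> C\<^sup>1\<^sub>b\<close> and \<open>z\<close>.\<close>

lemma R_grad_limit_eq_zero:
  assumes \<Phi>: "\<And>n. \<Phi> n \<in> C1b" and K: "\<And>n x. \<bar>\<Phi> n x\<bar> \<le> K"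
    and \<Phi>0: "AE x in M. (\<lambda>n. \<Phi> n x) \<longlonglongrightarrow> 0"
    and conv: "Lp_conv M p (\<lambda>n x. blinfun_apply R (grad (\<Phi> n) x)) g" and gL: "in_Lp M p g"
  shows "AE x in M. g x = 0"
proof (rule AE_eq_0_if_AE_inner_eq_0)
  fix z
  have fin: "finite_measure M" by (rule finite_measure_M)
  have [measurable]: "g \<in> borel_measurable M" using gL by (simp add: in_Lp_def)
  note [measurable] = C1b_measurable[OF \<Phi>]
  obtain v where vint: "integrable M v"
    and ibp: "\<And>\<phi>. \<phi> \<in> C1b \<Longrightarrow> (\<integral>x. blinfun_apply R (grad \<phi> x) \<bullet> z \<partial>M) = (\<integral>x. v x * \<phi> x \<partial>M)"
    by (rule standing_density[of z]) (rule that)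
  have gint: "integrable M (\<lambda>x. g x \<bullet> z)"
    using in_Lp_integrable_inner[OF fin _ gL] p by simp
  have L1: "(\<lambda>n. \<integral>\<^sup>+x. ennreal (norm (blinfun_apply R (grad (\<Phi> n) x) - g x)) \<partial>M) \<longlonglongrightarrow> 0"
    using p by (intro Lp_conv_zero_imp_L1[OF prob _ _ conv[unfolded Lp_conv_iff_diff_zero[of M p _ g]]]) auto
  show "AE x in M. g x \<bullet> z = 0"
  proof (rule AE_zero_if_orthogonal_C1b[OF sets gint _ fin])
    fix \<psi> :: "'a \<Rightarrow> real" assume \<psi>: "\<psi> \<in> C1b"
    note [measurable] = C1b_measurable[OF \<psi>]
    obtain B where B: "\<And>x. \<bar>\<psi> x\<bar> \<le> B" using C1bD(3)[OF \<psi>] by metis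
    have "(\<lambda>n. \<integral>x. \<psi> x * (blinfun_apply R (grad (\<Phi> n) x) \<bullet> z) \<partial>M) \<longlonglongrightarrow> (\<integral>x. \<psi> x * (g x \<bullet> z) \<partial>M)"
      by (rule tendsto_integral_mult_inner[OF L1 _ _ _ B integrable_bounded_mult integrable_bounded_mult])
        (use C1b_integrable_R_grad_inner[OF \<Phi>] gint B in auto)
    moreover have "(\<lambda>n. \<integral>x. \<psi> x * (blinfun_apply R (grad (\<Phi> n) x) \<bullet> z) \<partial>M) \<longlonglongrightarrow> 0 - 0"
    proof -
      have "integrable M (\<lambda>x. \<psi> x * v x)"
        by (rule integrable_bounded_mult[OF vint _ B]) measurable
      then have "(\<lambda>n. (\<integral>x. \<Phi> n x * (v x * \<psi> x) \<partial>M)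
          - (\<integral>x. \<Phi> n x * (blinfun_apply R (grad \<psi> x) \<bullet> z) \<partial>M)) \<longlonglongrightarrow> 0 - 0"
        using C1b_integrable_R_grad_inner[OF \<psi>]
        by (intro tendsto_diff integral_mult_tendsto_zero[OF _ _ K \<Phi>0]) (auto simp: mult.commute)
      then show ?thesis using C1b_integration_by_parts[OF sets fin ibp \<Phi> \<psi>] by simp
    qed
    ultimately show "(\<integral>x. \<psi> x * (g x \<bullet> z) \<partial>M) = 0"
      using LIMSEQ_unique by fastforce
  qed
qed

lemma Mp_graph_unique:
  assumes g1: "Mp_graph M R p \<phi> g1" and g2: "Mp_graph M R p \<phi> g2" and \<phi>: "in_Linf M \<phi>"
  shows "AE x in M. g1 x = g2 x"
proof -
  have p0: "p > 0" using p by simp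
  obtain C where "AE x in M. \<bar>\<phi> x\<bar> \<le> C" using \<phi> unfolding in_Linf_def by blast
  then have bd: "AE x in M. \<bar>\<phi> x\<bar> \<le> \<bar>C\<bar>" by (auto elim: eventually_mono)
  have g1L: "in_Lp M p g1" and g2L: "in_Lp M p g2" using g1 g2 by (auto simp: Mp_graph_def)
  have [measurable]: "g1 \<in> borel_measurable M" "g2 \<in> borel_measurable M"
    using g1L g2L by (auto simp: in_Lp_def)
  obtain G1 where G1: "\<And>n. G1 n \<in> C1b" "\<And>n x. \<bar>G1 n x\<bar> \<le> \<bar>C\<bar> + 1"
    "Lp_conv M p (\<lambda>n x. blinfun_apply R (grad (G1 n) x)) g1" "AE x in M. (\<lambda>n. G1 n x) \<longlonglongrightarrow> \<phi> x"
    by (rule Mp_graph_bounded_approx[OF g1 _ zero_less_one bd]) auto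
  obtain G2 where G2: "\<And>n. G2 n \<in> C1b" "\<And>n x. \<bar>G2 n x\<bar> \<le> \<bar>C\<bar> + 1"
    "Lp_conv M p (\<lambda>n x. blinfun_apply R (grad (G2 n) x)) g2" "AE x in M. (\<lambda>n. G2 n x) \<longlonglongrightarrow> \<phi> x"
    by (rule Mp_graph_bounded_approx[OF g2 _ zero_less_one bd]) auto
  note [measurable] = C1b_measurable[OF G1(1)] C1b_measurable[OF G2(1)]
  define \<Phi> where "\<Phi> n x = G1 n x - G2 n x" for n x
  have "AE x in M. g1 x - g2 x = 0"
  proof (rule R_grad_limit_eq_zero)
    show "\<Phi> n \<in> C1b" for n unfolding \<Phi>_def[abs_def] using C1b_diff(1)[OF G1(1) G2(1)] .
    show "\<bar>\<Phi> n x\<bar> \<le> (\<bar>C\<bar> + 1) + (\<bar>C\<bar> + 1)" for n x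
      unfolding \<Phi>_def by (rule order_trans[OF abs_triangle_ineq4 add_mono[OF G1(2) G2(2)]])
    show "AE x in M. (\<lambda>n. \<Phi> n x) \<longlonglongrightarrow> 0"
      using G1(4) G2(4) by eventually_elim (use tendsto_diff in \<open>fastforce simp: \<Phi>_def\<close>)
    have "Lp_conv M p (\<lambda>n x. blinfun_apply R (grad (G1 n) x) - blinfun_apply R (grad (G2 n) x))
        (\<lambda>x. g1 x - g2 x)"
      by (rule Lp_conv_diff[OF p0 _ _ _ _ G1(3) G2(3)]) measurable
    then show "Lp_conv M p (\<lambda>n x. blinfun_apply R (grad (\<Phi> n) x)) (\<lambda>x. g1 x - g2 x)"
      unfolding \<Phi>_def[abs_def] C1b_diff(2)[OF G1(1) G2(1)] by (simp add: blinfun.diff_right)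
    have "in_Lp M p (\<lambda>x. (- 1::real) *\<^sub>R g2 x)" by (rule in_Lp_scaleR[OF p0 g2L, where C=1]) auto
    from in_Lp_add[OF p0 g1L this] show "in_Lp M p (\<lambda>x. g1 x - g2 x)" by simp
  qed
  then show ?thesis by auto
qed

lemma Mp_graph_AE_zero:
  assumes "in_Linf M \<phi>" "AE x in M. \<phi> x = 0"
  shows "Mp_graph M R p \<phi> (\<lambda>x. 0)"
  unfolding Mp_graph_def
proof (intro conjI exI[of _ "\<lambda>n x. 0"])
  have [measurable]: "\<phi> \<in> borel_measurable M" using assms(1) by (simp add: in_Linf_def)
  show "in_Lp M p \<phi>"
    using assms(2) p by (intro in_Lp_bounded[OF finite_measure_M, where C=0]) (auto elim: eventually_mono)
  show "in_Lp M p (\<lambda>x. 0::'a)" using p by (simp add: in_Lp_def)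
  show "\<forall>n. (\<lambda>x. 0::real) \<in> C1b" by (simp add: C1b_const)
  show "Lp_conv M p (\<lambda>n x. 0) \<phi>" by (rule Lp_conv_const_zero[OF assms(2)])
  show "Lp_conv M p (\<lambda>n x. blinfun_apply R (grad (\<lambda>x. 0::real) x)) (\<lambda>x. 0)"
    by (simp add: C1b_const(2) Lp_conv_const_zero)
qed

lemma W1p_Linf_C1b_approx:
  assumes g0: "Mp_graph M R p \<phi> g0" and Li: "in_Linf M \<phi>" and \<delta>: "\<delta> > 0"
  obtains F where "\<And>n. F n \<in> C1b" "\<And>n x. \<bar>F n x\<bar> \<le> (1 + \<delta>) * Linf_norm M \<phi>" "Lp_conv M p F \<phi>"
    "\<And>g. Mp_graph M R p \<phi> g \<Longrightarrow> Lp_conv M p (\<lambda>n x. blinfun_apply R (grad (F n) x)) g"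
proof -
  define a where "a = Linf_norm M \<phi>"
  have a0: "a \<ge> 0" and abd: "AE x in M. \<bar>\<phi> x\<bar> \<le> a"
    using Linf_norm_bound[OF prob Li] unfolding a_def by auto
  obtain F where F: "\<And>n. F n \<in> C1b" "\<And>n x. \<bar>F n x\<bar> \<le> (1 + \<delta>) * a" "Lp_conv M p F \<phi>"
    "Lp_conv M p (\<lambda>n x. blinfun_apply R (grad (F n) x)) g0"
  proof (cases "a = 0")
    case True
    \<comment> \<open>the clamp needs \<open>b = \<delta> a > 0\<close>; here the bound forces \<open>F = 0\<close>\<close>
    then have \<phi>0: "AE x in M. \<phi> x = 0" using abd by (auto elim: eventually_mono)
    have "AE x in M. g0 x = 0"
      using Mp_graph_unique[OF g0 Mp_graph_AE_zero[OF Li \<phi>0] Li] .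
    then show thesis
      using that[of "\<lambda>n x. 0"] True Lp_conv_const_zero[OF \<phi>0]
      by (simp add: C1b_const Lp_conv_const_zero)
  next
    case False
    then have "\<delta> * a > 0" using a0 \<delta> by simp
    then obtain G where G: "\<And>n. G n \<in> C1b" "\<And>n x. \<bar>G n x\<bar> \<le> a + \<delta> * a" "Lp_conv M p G \<phi>"
        "Lp_conv M p (\<lambda>n x. blinfun_apply R (grad (G n) x)) g0"
      by (rule Mp_graph_bounded_approx[OF g0 a0 _ abd]) blast
    have "\<bar>G n x\<bar> \<le> (1 + \<delta>) * a" for n x using G(2)[of n x] by (simp add: algebra_simps)
    then show thesis using that G(1,3,4) by blast
  qed
  have "Lp_conv M p (\<lambda>n x. blinfun_apply R (grad (F n) x)) g" if "Mp_graph M R p \<phi> g" for g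
    by (rule Lp_conv_cong_AE[OF F(4)]) (use Mp_graph_unique[OF g0 that Li] in \<open>auto elim: eventually_mono\<close>)
  then show thesis using that F unfolding a_def by blast
qed

lemma Mp_graph_mult:
  assumes L\<phi>: "in_Linf M \<phi>" and L\<psi>: "in_Linf M \<psi>"
    and G\<phi>: "Mp_graph M R p \<phi> g\<phi>" and G\<psi>: "Mp_graph M R p \<psi> g\<psi>"
  shows "Mp_graph M R p (\<lambda>x. \<phi> x * \<psi> x) (\<lambda>x. \<phi> x *\<^sub>R g\<psi> x + \<psi> x *\<^sub>R g\<phi> x)"
proof -
  have p0: "p > 0" using p by simp
  obtain C\<phi> C\<psi> where [measurable]: "\<phi> \<in> borel_measurable M" "\<psi> \<in> borel_measurable M"
    and C\<phi>: "AE x in M. \<bar>\<phi> x\<bar> \<le> C\<phi>" and C\<psi>: "AE x in M. \<bar>\<psi> x\<bar> \<le> C\<psi>"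
    using L\<phi> L\<psi> unfolding in_Linf_def by blast
  have A\<phi>: "AE x in M. \<bar>\<phi> x\<bar> \<le> \<bar>C\<phi>\<bar>" and A\<psi>: "AE x in M. \<bar>\<psi> x\<bar> \<le> \<bar>C\<psi>\<bar>"
    using C\<phi> C\<psi> by (auto elim: eventually_mono)
  have g\<phi>L: "in_Lp M p g\<phi>" and g\<psi>L: "in_Lp M p g\<psi>" using G\<phi> G\<psi> by (auto simp: Mp_graph_def)
  have [measurable]: "g\<phi> \<in> borel_measurable M" "g\<psi> \<in> borel_measurable M"
    using g\<phi>L g\<psi>L by (auto simp: in_Lp_def)
  obtain \<Phi> where \<Phi>: "\<And>n. \<Phi> n \<in> C1b" "\<And>n x. \<bar>\<Phi> n x\<bar> \<le> \<bar>C\<phi>\<bar> + 1" "Lp_conv M p \<Phi> \<phi>"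
      "Lp_conv M p (\<lambda>n x. blinfun_apply R (grad (\<Phi> n) x)) g\<phi>" "AE x in M. (\<lambda>n. \<Phi> n x) \<longlonglongrightarrow> \<phi> x"
    by (rule Mp_graph_bounded_approx[OF G\<phi> _ zero_less_one A\<phi>]) auto
  obtain \<Psi> where \<Psi>: "\<And>n. \<Psi> n \<in> C1b" "\<And>n x. \<bar>\<Psi> n x\<bar> \<le> \<bar>C\<psi>\<bar> + 1" "Lp_conv M p \<Psi> \<psi>"
      "Lp_conv M p (\<lambda>n x. blinfun_apply R (grad (\<Psi> n) x)) g\<psi>" "AE x in M. (\<lambda>n. \<Psi> n x) \<longlonglongrightarrow> \<psi> x"
    by (rule Mp_graph_bounded_approx[OF G\<psi> _ zero_less_one A\<psi>]) auto
  note [measurable] = C1b_measurable[OF \<Phi>(1)] C1b_measurable[OF \<Psi>(1)]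
  have A\<phi>1: "AE x in M. \<bar>\<phi> x\<bar> \<le> \<bar>C\<phi>\<bar> + 1" and A\<psi>1: "AE x in M. \<bar>\<psi> x\<bar> \<le> \<bar>C\<psi>\<bar> + 1"
    using A\<phi> A\<psi> by (auto elim: eventually_mono)
  have \<psi>L: "in_Lp M p \<psi>" by (rule in_Lp_bounded[OF finite_measure_M _ A\<psi> p0]) measurable
  have "Lp_conv M p (\<lambda>n x. \<Phi> n x * \<Psi> n x) (\<lambda>x. \<phi> x * \<psi> x)"
    using Lp_conv_scaleR[OF p0 _ _ _ _ \<Phi>(2) A\<phi>1 \<Phi>(5) \<Psi>(3) \<psi>L] by simp
  moreover have "Lp_conv M p (\<lambda>n x. blinfun_apply R (grad (\<lambda>x. \<Phi> n x * \<Psi> n x) x))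
      (\<lambda>x. \<phi> x *\<^sub>R g\<psi> x + \<psi> x *\<^sub>R g\<phi> x)"
  proof -
    have "Lp_conv M p (\<lambda>n x. \<Phi> n x *\<^sub>R blinfun_apply R (grad (\<Psi> n) x) + \<Psi> n x *\<^sub>R blinfun_apply R (grad (\<Phi> n) x))
        (\<lambda>x. \<phi> x *\<^sub>R g\<psi> x + \<psi> x *\<^sub>R g\<phi> x)"
      by (rule Lp_conv_add[OF p0 _ _ _ _ Lp_conv_scaleR[OF p0 _ _ _ _ \<Phi>(2) A\<phi>1 \<Phi>(5) \<Psi>(4) g\<psi>L]
            Lp_conv_scaleR[OF p0 _ _ _ _ \<Psi>(2) A\<psi>1 \<Psi>(5) \<Phi>(4) g\<phi>L]]) measurable
    then show ?thesis
      by (simp add: C1b_mult(2)[OF \<Phi>(1) \<Psi>(1)] blinfun.add_right blinfun.scaleR_right)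
  qed
  moreover have "AE x in M. \<bar>\<phi> x * \<psi> x\<bar> \<le> \<bar>C\<phi>\<bar> * \<bar>C\<psi>\<bar>"
    using A\<phi> A\<psi> by eventually_elim (simp add: abs_mult mult_mono)
  then have "in_Lp M p (\<lambda>x. \<phi> x * \<psi> x)"
    by (rule in_Lp_bounded[OF finite_measure_M _ _ p0, rotated]) measurable
  moreover have "in_Lp M p (\<lambda>x. \<phi> x *\<^sub>R g\<psi> x + \<psi> x *\<^sub>R g\<phi> x)"
    by (intro in_Lp_add[OF p0] in_Lp_scaleR[OF p0 g\<psi>L _ A\<phi>] in_Lp_scaleR[OF p0 g\<phi>L _ A\<psi>]) measurable
  ultimately show ?thesis
    unfolding Mp_graph_def using C1b_mult(1)[OF \<Phi>(1) \<Psi>(1)]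
    by (intro conjI exI[of _ "\<lambda>n x. \<Phi> n x * \<Psi> n x"]) auto
qed

end

theorem lemma2p5:
  fixes M :: "'a::{real_inner,polish_space} measure"
    and R :: "'a \<Rightarrow>\<^sub>L 'a"
    and p :: real
  assumes prob: "prob_space M"
    and borel: "sets M = sets borel"
    and standing: "\<forall>z. \<exists>v. (\<forall>r>1. in_Lp M r v) \<and>
        (\<forall>\<phi>\<in>C1b. (\<integral>x. blinfun_apply R (grad \<phi> x) \<bullet> z \<partial>M) = (\<integral>x. v x * \<phi> x \<partial>M))"
    and p: "1 < p"
  shows
    "(\<forall>\<phi> \<delta>. \<phi> \<in> W1p M R p \<and> in_Linf M \<phi> \<and> \<delta> > 0 \<longrightarrow>
        (\<exists>F. (\<forall>n. F n \<in> C1b)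
            \<and> (\<forall>n x. \<bar>F n x\<bar> \<le> (1 + \<delta>) * Linf_norm M \<phi>)
            \<and> Lp_conv M p F \<phi>
            \<and> (\<forall>g. Mp_graph M R p \<phi> g \<longrightarrow>
                   Lp_conv M p (\<lambda>n x. blinfun_apply R (grad (F n) x)) g)))
     \<and>
     (\<forall>\<phi> \<psi> g\<phi> g\<psi>. in_Linf M \<phi> \<and> in_Linf M \<psi> \<and>
        Mp_graph M R p \<phi> g\<phi> \<and> Mp_graph M R p \<psi> g\<psi> \<longrightarrow>
        (\<lambda>x. \<phi> x * \<psi> x) \<in> W1p M R p \<and>
        Mp_graph M R p (\<lambda>x. \<phi> x * \<psi> x) (\<lambda>x. \<phi> x *\<^sub>R g\<psi> x + \<psi> x *\<^sub>R g\<phi> x))"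
proof (intro conjI allI impI)
  fix \<phi> :: "'a \<Rightarrow> real" and \<delta> :: real
  assume asm: "\<phi> \<in> W1p M R p \<and> in_Linf M \<phi> \<and> \<delta> > 0"
  then have Li: "in_Linf M \<phi>" and \<delta>: "\<delta> > 0" by simp_all
  from asm obtain g0 where g0: "Mp_graph M R p \<phi> g0" by (auto simp: W1p_def)
  obtain F where "\<And>n. F n \<in> C1b" "\<And>n x. \<bar>F n x\<bar> \<le> (1 + \<delta>) * Linf_norm M \<phi>" "Lp_conv M p F \<phi>"
    "\<And>g. Mp_graph M R p \<phi> g \<Longrightarrow> Lp_conv M p (\<lambda>n x. blinfun_apply R (grad (F n) x)) g"
    by (rule W1p_Linf_C1b_approx[OF prob borel standing p g0 Li \<delta>]) (rule that)
  then show "\<exists>F. (\<forall>n. F n \<in> C1b) \<and> (\<forall>n x. \<bar>F n x\<bar> \<le> (1 + \<delta>) * Linf_norm M \<phi>) \<and> Lp_conv M p F \<phi>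
      \<and> (\<forall>g. Mp_graph M R p \<phi> g \<longrightarrow> Lp_conv M p (\<lambda>n x. blinfun_apply R (grad (F n) x)) g)"
    by (intro exI[of _ F]) simp
next
  fix \<phi> \<psi> :: "'a \<Rightarrow> real" and g\<phi> g\<psi> :: "'a \<Rightarrow> 'a"
  assume "in_Linf M \<phi> \<and> in_Linf M \<psi> \<and> Mp_graph M R p \<phi> g\<phi> \<and> Mp_graph M R p \<psi> g\<psi>"
  then have "Mp_graph M R p (\<lambda>x. \<phi> x * \<psi> x) (\<lambda>x. \<phi> x *\<^sub>R g\<psi> x + \<psi> x *\<^sub>R g\<phi> x)"
    by (intro Mp_graph_mult[OF prob borel standing p]) simp_all
  then show "(\<lambda>x. \<phi> x * \<psi> x) \<in> W1p M R p"
    and "Mp_graph M R p (\<lambda>x. \<phi> x * \<psi> x) (\<lambda>x. \<phi> x *\<^sub>R g\<psi> x + \<psi> x *\<^sub>R g\<phi> x)"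
    unfolding W1p_def by auto
qed

end
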